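(* Let $N\ge 1$, $0<s\le 1$ and $1<p<\infty$ be such that $s\,p>N$. For every $\varphi\in \mathcal{W}^{s,p}(\mathbb{R}^N)$ there exist two distinct points $x_0,y_0\in \mathbb{R}^N$ such that \[ [\varphi]_{C^{0,\alpha_{s,p}}(\mathbb{R}^N)}=\frac{|\varphi(x_0)-\varphi(y_0)|}{|x_0-y_0|^{\alpha_{s,p}}}. \]
   Context: For $0<s<1$, $[\varphi]_{W^{s,p}(\mathbb{R}^N)}=\left(\iint_{\mathbb{R}^N\times\mathbb{R}^N}\frac{|\varphi(x)-\varphi(y)|^p}{|x-y|^{N+s\,p}}dx\,dy\right)^{1/p}$; for $s=1$, $[\varphi]_{W^{1,p}(\mathbb{R}^N)}=\|\nabla\varphi\|_{L^p(\mathbb{R}^N)}$. $[\varphi]_{C^{0,\alpha}(\mathbb{R}^N)}=\sup_{x\ne y}\frac{|\varphi(x)-\varphi(y)|}{|x-y|^\alpha}$; $\alpha_{s,p}=s-N/p$. $\mathcal{W}^{s,p}(\mathbb{R}^N)$ is the set of continuous functions $\varphi$ with $[\varphi]_{C^{0,\alpha_{s,p}}(\mathbb{R}^N)}<\infty$ and $[\varphi]_{W^{s,p}(\mathbb{R}^N)}<\infty$. *)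

theory Defs
  imports "HOL-Analysis.Analysis"
begin

definition smooth_fun :: "('a::euclidean_space \<Rightarrow> real) \<Rightarrow> bool" where
  "smooth_fun f \<longleftrightarrow> (\<exists>F. f \<in> F \<and>
     (\<forall>g\<in>F. g differentiable_on UNIV \<and>
        (\<forall>i\<in>Basis. (\<lambda>x. frechet_derivative g (at x) i) \<in> F)))"

definition test_fun :: "('a::euclidean_space \<Rightarrow> real) \<Rightarrow> bool" where
  "test_fun \<psi> \<longleftrightarrow> smooth_fun \<psi> \<and> compact (closure {x. \<psi> x \<noteq> 0})"

definition weak_gradient :: "('a::euclidean_space \<Rightarrow> real) \<Rightarrow> ('a \<Rightarrow> 'a) \<Rightarrow> bool" where
  "weak_gradient \<phi> g \<longleftrightarrow> g \<in> borel_measurable lborel \<and>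
     (\<forall>i\<in>Basis. \<forall>K. compact K \<longrightarrow> set_integrable lborel K (\<lambda>x. g x \<bullet> i)) \<and>
     (\<forall>\<psi>. test_fun \<psi> \<longrightarrow> (\<forall>i\<in>Basis.
        (\<integral>x. \<phi> x * frechet_derivative \<psi> (at x) i \<partial>lborel) =
          - (\<integral>x. (g x \<bullet> i) * \<psi> x \<partial>lborel)))"

text \<open>Finiteness of the seminorm [phi]_{W^{s,p}}: Gagliardo double integral for 0<s<1,
  L^p norm of the (weak) gradient for s = 1.\<close>
definition Wsp_seminorm_finite ::
    "real \<Rightarrow> real \<Rightarrow> ('a::euclidean_space \<Rightarrow> real) \<Rightarrow> bool" where
  "Wsp_seminorm_finite s p \<phi> \<longleftrightarrow>
     (if s < 1 then
        (\<integral>\<^sup>+ x. \<integral>\<^sup>+ y. ennreal (\<bar>\<phi> x - \<phi> y\<bar> powr p / norm (x - y) powr (real DIM('a) + s * p))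
            \<partial>lborel \<partial>lborel) < \<infinity>
      else
        (\<exists>g. weak_gradient \<phi> g \<and> (\<integral>\<^sup>+ x. ennreal (norm (g x) powr p) \<partial>lborel) < \<infinity>))"

definition holder_quot :: "real \<Rightarrow> ('a::euclidean_space \<Rightarrow> real) \<Rightarrow> 'a \<Rightarrow> 'a \<Rightarrow> real" where
  "holder_quot \<alpha> \<phi> x y = \<bar>\<phi> x - \<phi> y\<bar> / norm (x - y) powr \<alpha>"

definition holder_seminorm :: "real \<Rightarrow> ('a::euclidean_space \<Rightarrow> real) \<Rightarrow> real" where
  "holder_seminorm \<alpha> \<phi> = (SUP xy\<in>{(x, y). x \<noteq> y}. holder_quot \<alpha> \<phi> (fst xy) (snd xy))"

definition holder_finite :: "real \<Rightarrow> ('a::euclidean_space \<Rightarrow> real) \<Rightarrow> bool" where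
  "holder_finite \<alpha> \<phi> \<longleftrightarrow> bdd_above ((\<lambda>xy. holder_quot \<alpha> \<phi> (fst xy) (snd xy)) ` {(x, y). x \<noteq> y})"

definition alpha_sp :: "real \<Rightarrow> real \<Rightarrow> 'a::euclidean_space itself \<Rightarrow> real" where
  "alpha_sp s p _ = s - real DIM('a) / p"

definition calW :: "real \<Rightarrow> real \<Rightarrow> ('a::euclidean_space \<Rightarrow> real) set" where
  "calW s p = {\<phi>. continuous_on UNIV \<phi> \<and> holder_finite (alpha_sp s p TYPE('a)) \<phi>
                 \<and> Wsp_seminorm_finite s p \<phi>}"

end

(*
  Let L be the Hoelder seminorm and alpha = s - N/p > 0. If L = 0 every pair of distinct
  points attains it. Otherwise it suffices to show that the difference quotient is at most
  L/2 + o(1) as the pair (x, y) leaves every compact subset of {x ~= y}, i.e. as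
  |x - y| -> 0, |x - y| -> oo or |x| -> oo: off a compact set of pairs the quotient is then
  below 3L/4, and on that compact set the continuous quotient attains its supremum.

  For the decay, compare phi near x and near y at the scale eta |x - y|. The Hoelder bound
  makes this cost at most 2 L (eta |x - y|)^alpha <= (L/2) |x - y|^alpha, and what remains
  is controlled by the W^{s,p} energy of phi near x and y (the Gagliardo integral over
  B(x, eta r) x B(y, eta r) if s < 1, the L^1 mass of the weak gradient on a ball of
  radius comparable to r if s = 1). After scaling, this energy tends to 0 in all three
  regimes by absolute continuity of the integral.
*)
theory Submission
  imports Defs "HOL-Computational_Algebra.Polynomial"
begin

section \<open>Smooth functions of one real variable\<close>

fun differentiable_upto :: "nat \<Rightarrow> (real \<Rightarrow> real) \<Rightarrow> bool" where
  "differentiable_upto 0 f \<longleftrightarrow> (\<forall>x. f differentiable (at x))"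
| "differentiable_upto (Suc n) f \<longleftrightarrow> (\<forall>x. f differentiable (at x)) \<and> differentiable_upto n (deriv f)"

definition real_smooth :: "(real \<Rightarrow> real) \<Rightarrow> bool" where
  "real_smooth f \<longleftrightarrow> (\<forall>n. differentiable_upto n f)"

lemma differentiable_upto_Suc_imp: "differentiable_upto (Suc n) f \<Longrightarrow> differentiable_upto n f"
  by (induction n arbitrary: f) auto

lemma deriv_eqI: "(\<And>x. (f has_real_derivative f' x) (at x)) \<Longrightarrow> deriv f = f'"
  by (rule ext) (simp add: DERIV_imp_deriv)

lemma has_real_derivative_deriv: "f differentiable (at x) \<Longrightarrow> (f has_real_derivative deriv f x) (at x)"
  using DERIV_deriv_iff_real_differentiable by blast

lemma differentiable_upto_add:
  "differentiable_upto n u \<Longrightarrow> differentiable_upto n v \<Longrightarrow> differentiable_upto n (\<lambda>t. u t + v t)"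
proof (induction n arbitrary: u v)
  case (Suc n)
  then have "deriv (\<lambda>t. u t + v t) = (\<lambda>t. deriv u t + deriv v t)"
    by (intro deriv_eqI DERIV_add has_real_derivative_deriv) auto
  with Suc show ?case by auto
qed auto

lemma differentiable_upto_cmult: "differentiable_upto n u \<Longrightarrow> differentiable_upto n (\<lambda>t. c * u t)"
proof (induction n arbitrary: u)
  case (Suc n)
  then have "deriv (\<lambda>t. c * u t) = (\<lambda>t. c * deriv u t)"
    by (intro deriv_eqI DERIV_cmult has_real_derivative_deriv) auto
  with Suc show ?case by auto
qed auto

lemma differentiable_upto_mult:
  "differentiable_upto n u \<Longrightarrow> differentiable_upto n v \<Longrightarrow> differentiable_upto n (\<lambda>t. u t * v t)"
proof (induction n arbitrary: u v)
  case (Suc n)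
  have "deriv (\<lambda>t. u t * v t) = (\<lambda>t. deriv u t * v t + u t * deriv v t)"
    by (rule deriv_eqI, rule DERIV_mult'[THEN DERIV_cong])
       (use Suc.prems in \<open>auto intro: has_real_derivative_deriv\<close>)
  moreover have "differentiable_upto n (\<lambda>t. deriv u t * v t)" "differentiable_upto n (\<lambda>t. u t * deriv v t)"
    using Suc.prems differentiable_upto_Suc_imp[OF Suc.prems(1)] differentiable_upto_Suc_imp[OF Suc.prems(2)]
    by (auto intro!: Suc.IH)
  ultimately show ?case
    using Suc.prems by (auto intro: differentiable_upto_add)
qed auto

lemma has_real_derivative_affine_comp:
  assumes "u differentiable (at (c * x + d))"
  shows "((\<lambda>t. u (c * t + d)) has_real_derivative c * deriv u (c * x + d)) (at x)"
proof -
  have "((\<lambda>t. c * t + d) has_real_derivative c) (at x)"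
    by (auto intro!: derivative_eq_intros)
  from DERIV_chain2[OF has_real_derivative_deriv[OF assms] this] show ?thesis
    by (simp add: mult.commute)
qed

lemma differentiable_upto_affine:
  "differentiable_upto n u \<Longrightarrow> differentiable_upto n (\<lambda>t. u (c * t + d))"
proof (induction n arbitrary: u)
  case 0
  then show ?case
    using has_real_derivative_affine_comp real_differentiable_def by fastforce
next
  case (Suc n)
  then have d: "((\<lambda>t. u (c * t + d)) has_real_derivative c * deriv u (c * x + d)) (at x)" for x
    by (simp add: has_real_derivative_affine_comp)
  then have "deriv (\<lambda>t. u (c * t + d)) = (\<lambda>t. c * deriv u (c * t + d))"
    by (rule deriv_eqI)
  moreover have "differentiable_upto n (\<lambda>t. c * deriv u (c * t + d))"
    using Suc by (simp add: differentiable_upto_cmult)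
  ultimately show ?case
    using d real_differentiable_def by auto
qed

lemma real_smooth_add: "real_smooth u \<Longrightarrow> real_smooth v \<Longrightarrow> real_smooth (\<lambda>t. u t + v t)"
  and real_smooth_cmult: "real_smooth u \<Longrightarrow> real_smooth (\<lambda>t. c * u t)"
  and real_smooth_mult: "real_smooth u \<Longrightarrow> real_smooth v \<Longrightarrow> real_smooth (\<lambda>t. u t * v t)"
  and real_smooth_affine: "real_smooth u \<Longrightarrow> real_smooth (\<lambda>t. u (c * t + d))"
  by (simp_all add: real_smooth_def differentiable_upto_add differentiable_upto_cmult
      differentiable_upto_mult differentiable_upto_affine)

lemma real_smooth_diff: "real_smooth u \<Longrightarrow> real_smooth v \<Longrightarrow> real_smooth (\<lambda>t. u t - v t)"
  using real_smooth_add[of u "\<lambda>t. (-1) * v t"] real_smooth_cmult[of v "-1"] by simp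

lemma real_smooth_shift: "real_smooth u \<Longrightarrow> real_smooth (\<lambda>t. u (t - c))"
  using real_smooth_affine[of u 1 "-c"] by simp

lemma real_smooth_deriv: "real_smooth u \<Longrightarrow> real_smooth (deriv u)"
  unfolding real_smooth_def by (metis differentiable_upto.simps(2))

lemma real_smooth_differentiable: "real_smooth u \<Longrightarrow> u differentiable (at x)"
  unfolding real_smooth_def by (metis differentiable_upto.simps(1))

lemma real_smooth_continuous_on: "real_smooth u \<Longrightarrow> continuous_on S u"
  by (meson continuous_at_imp_continuous_on differentiable_imp_continuous_within
      real_smooth_differentiable)

lemma real_smooth_if_DERIV:
  assumes "\<And>x. (f has_real_derivative f' x) (at x)" and "real_smooth f'"
  shows "real_smooth f"
  unfolding real_smooth_def
proof
  fix n
  have "deriv f = f'" using assms(1) by (rule deriv_eqI)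
  then have "differentiable_upto (Suc n) f"
    using assms real_differentiable_def real_smooth_def by auto
  then show "differentiable_upto n f" by (rule differentiable_upto_Suc_imp)
qed

definition poly_exp_recip :: "real poly \<Rightarrow> real \<Rightarrow> real" where
  "poly_exp_recip P t = (if t > 0 then poly P (1/t) * exp (-1/t) else 0)"

lemma tendsto_poly_times_exp_neg: "((\<lambda>u::real. u * poly P u / exp u) \<longlongrightarrow> 0) at_top"
proof -
  have "(\<lambda>u::real. u * poly P u / exp u) = (\<lambda>u. \<Sum>i\<le>degree P. coeff P i * (u ^ Suc i / exp u))"
    by (rule ext) (simp add: poly_altdef sum_distrib_left sum_divide_distrib algebra_simps)
  moreover have "((\<lambda>u::real. \<Sum>i\<le>degree P. coeff P i * (u ^ Suc i / exp u)) \<longlongrightarrow> (\<Sum>i\<le>degree P. coeff P i * 0)) at_top"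
    by (intro tendsto_sum tendsto_mult tendsto_const tendsto_power_div_exp_0)
  ultimately show ?thesis by simp
qed

lemma tendsto_poly_exp_recip_div: "((\<lambda>y. poly_exp_recip P y / y) \<longlongrightarrow> 0) (at 0)"
proof (rule filterlim_split_at)
  show "((\<lambda>y. poly_exp_recip P y / y) \<longlongrightarrow> 0) (at_left 0)"
  proof (rule Lim_transform_eventually[OF tendsto_const])
    show "\<forall>\<^sub>F y in at_left (0::real). 0 = poly_exp_recip P y / y"
      unfolding eventually_at_left_field by (rule exI[of _ "-1"]) (auto simp: poly_exp_recip_def)
  qed
  show "((\<lambda>y. poly_exp_recip P y / y) \<longlongrightarrow> 0) (at_right 0)"
  proof (rule Lim_transform_eventually)
    show "((\<lambda>y. inverse y * poly P (inverse y) / exp (inverse y)) \<longlongrightarrow> 0) (at_right (0::real))"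
      using filterlim_compose[OF tendsto_poly_times_exp_neg filterlim_inverse_at_top_right] by simp
    show "\<forall>\<^sub>F y in at_right (0::real). inverse y * poly P (inverse y) / exp (inverse y) = poly_exp_recip P y / y"
      using eventually_at_right_less[of "0::real"]
      by eventually_elim (simp add: poly_exp_recip_def exp_minus divide_simps)
  qed
qed

lemma has_real_derivative_poly_exp_recip:
  "(poly_exp_recip P has_real_derivative poly_exp_recip ([:0, 0, 1:] * (P - pderiv P)) t) (at t)"
proof -
  consider "t > 0" | "t < 0" | "t = 0" by linarith
  then show ?thesis
  proof cases
    case 1
    let ?g = "\<lambda>t. poly P (1/t) * exp (-1/t)"
    have "(?g has_real_derivative
       (poly (pderiv P) (1/t) * (- 1 / t^2)) * exp (-1/t) + poly P (1/t) * (exp (-1/t) * (1/t^2))) (at t)"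
      using 1 by (auto intro!: derivative_eq_intros DERIV_chain2[OF poly_DERIV] simp: power2_eq_square)
    moreover have "(poly (pderiv P) (1/t) * (- 1 / t^2)) * exp (-1/t) + poly P (1/t) * (exp (-1/t) * (1/t^2))
        = poly_exp_recip ([:0, 0, 1:] * (P - pderiv P)) t"
      using 1 by (simp add: poly_exp_recip_def power2_eq_square field_simps)
    ultimately have "(?g has_real_derivative poly_exp_recip ([:0, 0, 1:] * (P - pderiv P)) t) (at t)"
      by simp
    then show ?thesis
      by (rule has_field_derivative_transform_within_open[of _ _ _ "{0<..}"])
         (use 1 in \<open>auto simp: poly_exp_recip_def\<close>)
  next
    case 2
    have "((\<lambda>_. 0) has_real_derivative poly_exp_recip ([:0, 0, 1:] * (P - pderiv P)) t) (at t)"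
      using 2 by (simp add: poly_exp_recip_def)
    then show ?thesis
      by (rule has_field_derivative_transform_within_open[of _ _ _ "{..<0}"])
         (use 2 in \<open>auto simp: poly_exp_recip_def\<close>)
  next
    case 3
    have "((\<lambda>y. (poly_exp_recip P y - poly_exp_recip P 0) / (y - 0)) \<longlongrightarrow> 0) (at 0)"
      using tendsto_poly_exp_recip_div by (simp add: poly_exp_recip_def)
    then show ?thesis using 3 by (simp add: has_field_derivative_iff poly_exp_recip_def)
  qed
qed

lemma real_smooth_poly_exp_recip: "real_smooth (poly_exp_recip P)"
proof -
  have "differentiable_upto n (poly_exp_recip P)" for n
  proof (induction n arbitrary: P)
    case (Suc n)
    have "deriv (poly_exp_recip P) = poly_exp_recip ([:0, 0, 1:] * (P - pderiv P))"
      by (rule deriv_eqI) (rule has_real_derivative_poly_exp_recip)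
    then show ?case using Suc has_real_derivative_poly_exp_recip real_differentiable_def by auto
  qed (use has_real_derivative_poly_exp_recip real_differentiable_def in auto)
  then show ?thesis by (simp add: real_smooth_def)
qed

definition bump :: "real \<Rightarrow> real" where
  "bump t = poly_exp_recip 1 (1 + t) * poly_exp_recip 1 (1 - t)"

lemma real_smooth_bump: "real_smooth bump"
proof -
  have "real_smooth (\<lambda>t. poly_exp_recip 1 (1 * t + 1) * poly_exp_recip 1 ((-1) * t + 1))"
    by (intro real_smooth_mult real_smooth_affine real_smooth_poly_exp_recip)
  then show ?thesis unfolding bump_def by (simp add: add.commute)
qed

lemma bump_nonneg: "bump t \<ge> 0"
  by (simp add: bump_def poly_exp_recip_def)

lemma bump_le_1: "bump t \<le> 1"
  unfolding bump_def by (rule mult_le_one) (auto simp: poly_exp_recip_def)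

lemma bump_eq_0: "\<bar>t\<bar> \<ge> 1 \<Longrightarrow> bump t = 0"
  by (auto simp: bump_def poly_exp_recip_def)

lemma bump_ge: "\<bar>t\<bar> \<le> 1/2 \<Longrightarrow> bump t \<ge> exp (-4)"
proof -
  assume t: "\<bar>t\<bar> \<le> 1/2"
  have "poly_exp_recip 1 s \<ge> exp (-2)" if "s \<ge> 1/2" for s
  proof -
    have "-1/s \<ge> -2" using that by (simp add: field_simps)
    then show ?thesis using that by (simp add: poly_exp_recip_def)
  qed
  then have "exp (-2) \<le> poly_exp_recip 1 (1 + t)" "exp (-2) \<le> poly_exp_recip 1 (1 - t)"
    using t by auto
  then have "exp (-2) * exp (-2) \<le> bump t"
    unfolding bump_def by (intro mult_mono) (auto intro: order_trans[OF exp_ge_zero])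
  moreover have "exp (-2) * exp (-2) = (exp (-4) :: real)"
    by (metis exp_add add_uminus_conv_diff diff_minus_eq_add minus_add_distrib numeral_Bit0 numeral_plus_numeral)
  ultimately show ?thesis by linarith
qed

section \<open>Test functions of tensor-product form\<close>

definition tensor_fun :: "('a::euclidean_space \<Rightarrow> real \<Rightarrow> real) \<Rightarrow> 'a \<Rightarrow> real" where
  "tensor_fun f z = (\<Prod>j\<in>Basis. f j (z \<bullet> j))"

lemma has_derivative_comp_inner:
  assumes "f differentiable (at (z \<bullet> k))"
  shows "((\<lambda>z. f (z \<bullet> k)) has_derivative (\<lambda>h. deriv f (z \<bullet> k) * (h \<bullet> k))) (at z)"
proof -
  have "((\<lambda>z. z \<bullet> k) has_derivative (\<lambda>h. h \<bullet> k)) (at z)"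
    by (auto intro!: derivative_eq_intros)
  moreover have "(f has_derivative (\<lambda>x. deriv f (z \<bullet> k) * x)) (at (z \<bullet> k))"
    using has_real_derivative_deriv[OF assms] unfolding has_field_derivative_def by simp
  ultimately show ?thesis
    using diff_chain_at[of "\<lambda>z. z \<bullet> k"] by (simp add: o_def)
qed

lemma tensor_fun_has_derivative:
  assumes "\<And>j. j \<in> Basis \<Longrightarrow> real_smooth (f j)"
  shows "(tensor_fun f has_derivative
           (\<lambda>h. \<Sum>k\<in>Basis. deriv (f k) (z \<bullet> k) * (h \<bullet> k) * (\<Prod>j\<in>Basis - {k}. f j (z \<bullet> j)))) (at z)"
  unfolding tensor_fun_def
  by (rule has_derivative_prod) (rule has_derivative_comp_inner[OF real_smooth_differentiable[OF assms]])

lemma frechet_derivative_tensor_fun: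
  assumes "\<And>j. j \<in> Basis \<Longrightarrow> real_smooth (f j)" and i: "i \<in> Basis"
  shows "frechet_derivative (tensor_fun f) (at z) i = deriv (f i) (z \<bullet> i) * (\<Prod>j\<in>Basis - {i}. f j (z \<bullet> j))"
proof -
  have "frechet_derivative (tensor_fun f) (at z) =
      (\<lambda>h. \<Sum>k\<in>Basis. deriv (f k) (z \<bullet> k) * (h \<bullet> k) * (\<Prod>j\<in>Basis - {k}. f j (z \<bullet> j)))"
    using frechet_derivative_at[OF tensor_fun_has_derivative[of f z, OF assms(1)]] by simp
  then have "frechet_derivative (tensor_fun f) (at z) i =
      (\<Sum>k\<in>Basis. deriv (f k) (z \<bullet> k) * (i \<bullet> k) * (\<Prod>j\<in>Basis - {k}. f j (z \<bullet> j)))"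
    by simp
  also have "\<dots> = (\<Sum>k\<in>Basis. if k = i then deriv (f k) (z \<bullet> k) * (\<Prod>j\<in>Basis - {k}. f j (z \<bullet> j)) else 0)"
    by (intro sum.cong refl) (use i in \<open>auto simp: inner_Basis\<close>)
  finally show ?thesis
    using i by (simp add: sum.delta')
qed

lemma tensor_fun_upd:
  assumes "i \<in> Basis"
  shows "tensor_fun (f(i := h)) z = h (z \<bullet> i) * (\<Prod>j\<in>Basis - {i}. f j (z \<bullet> j))"
proof -
  have "(\<Prod>j\<in>Basis - {i}. (f(i := h)) j (z \<bullet> j)) = (\<Prod>j\<in>Basis - {i}. f j (z \<bullet> j))"
    by (intro prod.cong) auto
  then show ?thesis
    unfolding tensor_fun_def using assms by (simp add: prod.remove)
qed

lemma smooth_fun_tensor_fun: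
  assumes "\<And>j. j \<in> Basis \<Longrightarrow> real_smooth (f j)"
  shows "smooth_fun (tensor_fun f)"
  unfolding smooth_fun_def
proof (intro exI conjI ballI)
  define F where "F = {tensor_fun f | f::'a \<Rightarrow> real \<Rightarrow> real. \<forall>j\<in>Basis. real_smooth (f j)}"
  show "tensor_fun f \<in> F" unfolding F_def using assms by blast
  fix g assume "g \<in> F"
  then obtain f' where g: "g = tensor_fun f'" and f': "\<And>j. j \<in> Basis \<Longrightarrow> real_smooth (f' j)"
    unfolding F_def by blast
  show "g differentiable_on UNIV"
    unfolding g differentiable_on_def differentiable_def
    using tensor_fun_has_derivative[of f', OF f'] by blast
  fix i :: 'a assume i: "i \<in> Basis"
  have "(\<lambda>x. frechet_derivative g (at x) i) = tensor_fun (f'(i := deriv (f' i)))"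
    by (rule ext) (simp add: g frechet_derivative_tensor_fun[of f', OF f' i] tensor_fun_upd[OF i])
  moreover have "\<forall>j\<in>Basis. real_smooth ((f'(i := deriv (f' i))) j)"
    using f' real_smooth_deriv by auto
  ultimately show "(\<lambda>x. frechet_derivative g (at x) i) \<in> F" unfolding F_def by blast
qed

lemma norm_le_sum_of_coordinate_bounds:
  fixes w :: "'a::euclidean_space"
  assumes "\<And>j. j \<in> Basis \<Longrightarrow> \<bar>w \<bullet> j\<bar> \<le> B j"
  shows "norm w \<le> (\<Sum>j\<in>Basis. B j)"
  using norm_le_l1[of w] sum_mono[of Basis "\<lambda>j. \<bar>w \<bullet> j\<bar>" B] assms by fastforce

lemma test_fun_tensor_fun:
  assumes "\<And>j. j \<in> Basis \<Longrightarrow> real_smooth (f j)"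
    and "\<And>j t. j \<in> Basis \<Longrightarrow> f j t \<noteq> 0 \<Longrightarrow> \<bar>t\<bar> \<le> R"
  shows "test_fun (tensor_fun f)"
  unfolding test_fun_def
proof
  show "smooth_fun (tensor_fun f)" by (rule smooth_fun_tensor_fun[of f, OF assms(1)])
  have "norm z \<le> (\<Sum>j\<in>(Basis::'a set). R)" if "tensor_fun f z \<noteq> 0" for z
    using that assms(2) unfolding tensor_fun_def by (intro norm_le_sum_of_coordinate_bounds) auto
  then have "{z. tensor_fun f z \<noteq> 0} \<subseteq> cball 0 (real DIM('a) * R)"
    by auto
  then show "compact (closure {z. tensor_fun f z \<noteq> 0})"
    using bounded_cball bounded_subset compact_closure by blast
qed

lemma continuous_on_tensor_fun:
  assumes "\<And>j. j \<in> Basis \<Longrightarrow> real_smooth (f j)"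
  shows "continuous_on S (tensor_fun f)"
  using tensor_fun_has_derivative[of f, OF assms] differentiable_def
  by (meson continuous_at_imp_continuous_on differentiable_imp_continuous_within)

section \<open>The mollifier and the shift test function\<close>

definition bump_scaled :: "real \<Rightarrow> real \<Rightarrow> real" where
  "bump_scaled \<epsilon> t = bump (t / \<epsilon>)"

definition bump_primitive :: "real \<Rightarrow> real \<Rightarrow> real" where
  "bump_primitive \<epsilon> t = integral {-2 * \<epsilon>..t} (bump_scaled \<epsilon>)"

definition bump_increment :: "real \<Rightarrow> real \<Rightarrow> real \<Rightarrow> real" where
  "bump_increment \<epsilon> a t = bump_primitive \<epsilon> t - bump_primitive \<epsilon> (t - a)"

lemma real_smooth_bump_scaled: "real_smooth (bump_scaled \<epsilon>)"
  using real_smooth_affine[OF real_smooth_bump, of "1/\<epsilon>" 0] by (simp add: bump_scaled_def[abs_def])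

lemma bump_scaled_nonneg: "bump_scaled \<epsilon> t \<ge> 0"
  by (simp add: bump_scaled_def bump_nonneg)

lemma bump_scaled_le_1: "bump_scaled \<epsilon> t \<le> 1"
  by (simp add: bump_scaled_def bump_le_1)

lemma bump_scaled_eq_0: "\<epsilon> > 0 \<Longrightarrow> \<bar>t\<bar> \<ge> \<epsilon> \<Longrightarrow> bump_scaled \<epsilon> t = 0"
  unfolding bump_scaled_def by (rule bump_eq_0) (simp add: abs_divide)

lemma bump_scaled_nonzero_imp: "\<epsilon> > 0 \<Longrightarrow> bump_scaled \<epsilon> t \<noteq> 0 \<Longrightarrow> \<bar>t\<bar> < \<epsilon>"
  using bump_scaled_eq_0 by force

lemma bump_scaled_ge: "\<epsilon> > 0 \<Longrightarrow> \<bar>t\<bar> \<le> \<epsilon>/2 \<Longrightarrow> bump_scaled \<epsilon> t \<ge> exp (-4)"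
  unfolding bump_scaled_def by (rule bump_ge) (simp add: abs_divide field_simps)

lemma has_real_derivative_bump_primitive:
  assumes "\<epsilon> > 0"
  shows "(bump_primitive \<epsilon> has_real_derivative bump_scaled \<epsilon> t) (at t)"
proof (cases "t > -2 * \<epsilon>")
  case True
  have "(bump_primitive \<epsilon> has_real_derivative bump_scaled \<epsilon> t) (at t within {-2 * \<epsilon>..t + 1})"
    unfolding bump_primitive_def[abs_def]
    by (rule integral_has_real_derivative) (use True real_smooth_continuous_on real_smooth_bump_scaled in auto)
  moreover have "at t within {-2 * \<epsilon>..t + 1} = at t"
    by (rule at_within_interior) (use True in simp)
  ultimately show ?thesis by simp
next
  case False
  then have t: "t < -\<epsilon>" using assms by simp
  have zero: "bump_primitive \<epsilon> s = 0" if "s < -\<epsilon>" for s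
  proof -
    have "(bump_scaled \<epsilon> has_integral 0) {-2 * \<epsilon>..s}"
      by (rule has_integral_is_0) (use that assms in \<open>auto intro!: bump_scaled_eq_0\<close>)
    then show ?thesis unfolding bump_primitive_def by (rule integral_unique)
  qed
  have "bump_scaled \<epsilon> t = 0"
    by (rule bump_scaled_eq_0) (use t assms in auto)
  then have "((\<lambda>_. 0) has_real_derivative bump_scaled \<epsilon> t) (at t)"
    by simp
  then show ?thesis
    by (rule has_field_derivative_transform_within_open[of _ _ _ "{..<-\<epsilon>}"]) (use t zero in auto)
qed

lemma has_real_derivative_bump_increment:
  assumes "\<epsilon> > 0"
  shows "(bump_increment \<epsilon> a has_real_derivative bump_scaled \<epsilon> t - bump_scaled \<epsilon> (t - a)) (at t)"
proof -
  have "((\<lambda>t. bump_primitive \<epsilon> (t - a)) has_real_derivative bump_scaled \<epsilon> (t - a) * 1) (at t)"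
    by (rule DERIV_chain2[OF has_real_derivative_bump_primitive[OF assms]]) (auto intro!: derivative_eq_intros)
  then show ?thesis
    unfolding bump_increment_def[abs_def]
    using has_real_derivative_bump_primitive[OF assms] by (auto intro!: derivative_eq_intros)
qed

lemma real_smooth_bump_increment: "\<epsilon> > 0 \<Longrightarrow> real_smooth (bump_increment \<epsilon> a)"
  by (rule real_smooth_if_DERIV[OF has_real_derivative_bump_increment])
     (auto intro!: real_smooth_diff real_smooth_bump_scaled real_smooth_shift)

lemma bump_increment_eq_mean_value:
  assumes "\<epsilon> > 0"
  obtains \<xi> where "\<bar>t - \<xi>\<bar> \<le> \<bar>a\<bar>" and "bump_increment \<epsilon> a t = a * bump_scaled \<epsilon> \<xi>"
proof -
  have cont: "continuous_on S (bump_primitive \<epsilon>)" for S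
    by (meson DERIV_isCont continuous_at_imp_continuous_on has_real_derivative_bump_primitive[OF assms])
  have diff: "bump_primitive \<epsilon> differentiable (at x)" for x
    using has_real_derivative_bump_primitive[OF assms] real_differentiable_def by blast
  consider "a = 0" | "a > 0" | "a < 0" by linarith
  then show ?thesis
  proof cases
    case 1
    then show ?thesis using that by (auto simp: bump_increment_def)
  next
    case 2
    obtain l \<xi> where "t - a < \<xi>" "\<xi> < t" "DERIV (bump_primitive \<epsilon>) \<xi> :> l"
      "bump_primitive \<epsilon> t - bump_primitive \<epsilon> (t - a) = (t - (t - a)) * l"
      using MVT[of "t - a" t "bump_primitive \<epsilon>"] 2 cont diff by force
    moreover have "l = bump_scaled \<epsilon> \<xi>"
      using DERIV_unique calculation(3) has_real_derivative_bump_primitive[OF assms] by blast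
    ultimately show ?thesis by (intro that[of \<xi>]) (auto simp: bump_increment_def)
  next
    case 3
    obtain l \<xi> where "t < \<xi>" "\<xi> < t - a" "DERIV (bump_primitive \<epsilon>) \<xi> :> l"
      "bump_primitive \<epsilon> (t - a) - bump_primitive \<epsilon> t = ((t - a) - t) * l"
      using MVT[of t "t - a" "bump_primitive \<epsilon>"] 3 cont diff by force
    moreover have "l = bump_scaled \<epsilon> \<xi>"
      using DERIV_unique calculation(3) has_real_derivative_bump_primitive[OF assms] by blast
    ultimately show ?thesis by (intro that[of \<xi>]) (auto simp: bump_increment_def algebra_simps)
  qed
qed

lemma abs_bump_increment_le: "\<epsilon> > 0 \<Longrightarrow> \<bar>bump_increment \<epsilon> a t\<bar> \<le> \<bar>a\<bar>"
  by (rule bump_increment_eq_mean_value[of \<epsilon> t a])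
     (auto simp: abs_mult bump_scaled_nonneg bump_scaled_le_1 mult_left_le)

lemma bump_increment_nonzero_imp: "\<epsilon> > 0 \<Longrightarrow> bump_increment \<epsilon> a t \<noteq> 0 \<Longrightarrow> \<bar>t\<bar> \<le> \<bar>a\<bar> + \<epsilon>"
  by (rule bump_increment_eq_mean_value[of \<epsilon> t a]) (force dest: bump_scaled_nonzero_imp)+

definition mollifier :: "real \<Rightarrow> 'a::euclidean_space \<Rightarrow> 'a \<Rightarrow> real" where
  "mollifier \<epsilon> u = tensor_fun (\<lambda>j t. bump_scaled \<epsilon> (t - u \<bullet> j))"

text \<open>Testing a weak gradient against \<open>shift_test \<epsilon> u i a\<close> compares the mollifications
  centred at \<open>u\<close> and at \<open>u + a *\<^sub>R i\<close>: its \<open>i\<close>-th partial derivative is their difference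
  (lemma \<open>partial_shift_test\<close>).\<close>
definition shift_test :: "real \<Rightarrow> 'a::euclidean_space \<Rightarrow> 'a \<Rightarrow> real \<Rightarrow> 'a \<Rightarrow> real" where
  "shift_test \<epsilon> u i a =
     tensor_fun (\<lambda>j t. if j = i then bump_increment \<epsilon> a (t - u \<bullet> i) else bump_scaled \<epsilon> (t - u \<bullet> j))"

lemma mollifier_eq: "mollifier \<epsilon> u z = (\<Prod>j\<in>Basis. bump_scaled \<epsilon> (z \<bullet> j - u \<bullet> j))"
  by (simp add: mollifier_def tensor_fun_def)

lemma mollifier_nonneg: "mollifier \<epsilon> u z \<ge> 0"
  unfolding mollifier_eq by (intro prod_nonneg) (simp add: bump_scaled_nonneg)

lemma mollifier_nonzero_imp:
  fixes u :: "'a::euclidean_space"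
  assumes "\<epsilon> > 0" and "mollifier \<epsilon> u z \<noteq> 0"
  shows "norm (z - u) \<le> real DIM('a) * \<epsilon>"
proof -
  have "\<bar>(z - u) \<bullet> j\<bar> \<le> \<epsilon>" if "j \<in> Basis" for j
    using assms that bump_scaled_nonzero_imp[OF assms(1)]
    by (fastforce simp: mollifier_eq inner_diff_left)
  then have "norm (z - u) \<le> (\<Sum>j\<in>(Basis::'a set). \<epsilon>)"
    by (rule norm_le_sum_of_coordinate_bounds)
  then show ?thesis by simp
qed

lemma continuous_on_mollifier: "continuous_on S (mollifier \<epsilon> u)"
  unfolding mollifier_def
  by (rule continuous_on_tensor_fun) (simp add: real_smooth_shift real_smooth_bump_scaled)

lemma integrable_if_support_in_cball:
  fixes h :: "'a::euclidean_space \<Rightarrow> real"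
  assumes "continuous_on UNIV h" and "\<And>z. h z \<noteq> 0 \<Longrightarrow> z \<in> cball u R"
  shows "integrable lborel h"
proof -
  have "integrable lborel (\<lambda>x. indicator (cball u R) x *\<^sub>R h x)"
    by (rule borel_integrable_compact) (use assms(1) continuous_on_subset in auto)
  moreover have "(\<lambda>x. indicator (cball u R) x *\<^sub>R h x) = h"
    using assms(2) by (force simp: indicator_def)
  ultimately show ?thesis by simp
qed

lemma integrable_mult_mollifier:
  fixes u :: "'a::euclidean_space"
  assumes "\<epsilon> > 0" and "continuous_on UNIV f"
  shows "integrable lborel (\<lambda>z. f z * mollifier \<epsilon> u z)"
proof (rule integrable_if_support_in_cball[where u = u and R = "real DIM('a) * \<epsilon>"])
  show "continuous_on UNIV (\<lambda>z. f z * mollifier \<epsilon> u z)"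
    using assms(2) continuous_on_mollifier by (intro continuous_intros) auto
  show "z \<in> cball u (real DIM('a) * \<epsilon>)" if "f z * mollifier \<epsilon> u z \<noteq> 0" for z
    using that mollifier_nonzero_imp[OF assms(1), of u z] by (simp add: dist_norm norm_minus_commute)
qed

lemma integral_mollifier_translate:
  fixes u :: "'a::euclidean_space"
  shows "(\<integral>z. mollifier \<epsilon> u z \<partial>lborel) = (\<integral>z. mollifier \<epsilon> (0::'a) z \<partial>lborel)"
proof -
  have "mollifier \<epsilon> u \<in> borel_measurable borel"
    by (rule borel_measurable_continuous_onI[OF continuous_on_mollifier])
  have "(\<integral>z. mollifier \<epsilon> u z \<partial>lborel) = (\<integral>z. mollifier \<epsilon> u z \<partial>distr lborel borel ((+) u))"
    by (simp add: lborel_distr_plus)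
  also have "\<dots> = (\<integral>z. mollifier \<epsilon> u (u + z) \<partial>lborel)"
    by (rule integral_distr) (use \<open>mollifier \<epsilon> u \<in> borel_measurable borel\<close> in auto)
  also have "\<dots> = (\<integral>z. mollifier \<epsilon> (0::'a) z \<partial>lborel)"
    by (simp add: mollifier_eq inner_add_left)
  finally show ?thesis .
qed

lemma integral_mollifier_ge:
  assumes "\<epsilon> > 0"
  shows "exp (-4::real) ^ DIM('a) * measure lborel (ball (0::'a::euclidean_space) (\<epsilon>/2))
           \<le> (\<integral>z. mollifier \<epsilon> (0::'a) z \<partial>lborel)"
proof -
  have "exp (-4::real) ^ DIM('a) * indicator (ball (0::'a) (\<epsilon>/2)) z \<le> mollifier \<epsilon> (0::'a) z" for z
  proof (cases "z \<in> ball 0 (\<epsilon>/2)")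
    case True
    have "(\<Prod>j\<in>(Basis::'a set). exp (-4)) \<le> (\<Prod>j\<in>Basis. bump_scaled \<epsilon> (z \<bullet> j - 0 \<bullet> j))"
    proof (rule prod_mono)
      fix j :: 'a assume "j \<in> Basis"
      then have "\<bar>z \<bullet> j\<bar> \<le> \<epsilon>/2"
        using Basis_le_norm[of j z] True by simp
      then show "0 \<le> exp (-4::real) \<and> exp (-4) \<le> bump_scaled \<epsilon> (z \<bullet> j - 0 \<bullet> j)"
        using bump_scaled_ge[OF assms] by simp
    qed
    then show ?thesis using True unfolding mollifier_eq by simp
  qed (simp add: mollifier_nonneg)
  moreover have "integrable lborel (\<lambda>z. exp (-4::real) ^ DIM('a) * indicator (ball (0::'a) (\<epsilon>/2)) z)"
    using emeasure_lborel_ball_finite[of "0::'a" "\<epsilon>/2"]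
    by (intro integrable_mult_right integrable_real_indicator) (auto simp: top.not_eq_extremum)
  moreover have "integrable lborel (mollifier \<epsilon> (0::'a))"
    using integrable_mult_mollifier[OF assms, of "\<lambda>_. 1" 0] by simp
  ultimately have "(\<integral>z. exp (-4::real) ^ DIM('a) * indicator (ball (0::'a) (\<epsilon>/2)) z \<partial>lborel)
      \<le> (\<integral>z. mollifier \<epsilon> (0::'a) z \<partial>lborel)"
    by (intro integral_mono)
  then show ?thesis by simp
qed

lemma real_smooth_shift_test_factor:
  "\<epsilon> > 0 \<Longrightarrow>
    real_smooth ((\<lambda>j t. if j = i then bump_increment \<epsilon> a (t - u \<bullet> i) else bump_scaled \<epsilon> (t - u \<bullet> j)) j)"
  by (cases "j = i") (simp_all add: real_smooth_shift real_smooth_bump_increment real_smooth_bump_scaled)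

lemma continuous_on_shift_test: "\<epsilon> > 0 \<Longrightarrow> continuous_on S (shift_test \<epsilon> u i a)"
  unfolding shift_test_def by (rule continuous_on_tensor_fun) (rule real_smooth_shift_test_factor)

lemma shift_test_eq:
  "i \<in> Basis \<Longrightarrow> shift_test \<epsilon> u i a z =
     bump_increment \<epsilon> a (z \<bullet> i - u \<bullet> i) * (\<Prod>j\<in>Basis - {i}. bump_scaled \<epsilon> (z \<bullet> j - u \<bullet> j))"
  unfolding shift_test_def tensor_fun_def by (simp add: prod.remove)

lemma abs_shift_test_le:
  assumes "\<epsilon> > 0" and "i \<in> Basis"
  shows "\<bar>shift_test \<epsilon> u i a z\<bar> \<le> \<bar>a\<bar>"
proof -
  have "\<bar>\<Prod>j\<in>Basis - {i}. bump_scaled \<epsilon> (z \<bullet> j - u \<bullet> j)\<bar> \<le> 1"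
    by (simp add: abs_prod prod_le_1 bump_scaled_nonneg bump_scaled_le_1)
  then show ?thesis
    unfolding shift_test_eq[OF assms(2)] abs_mult
    using mult_mono[OF abs_bump_increment_le[OF assms(1)]] by fastforce
qed

lemma shift_test_nonzero_imp:
  fixes u :: "'a::euclidean_space"
  assumes e: "\<epsilon> > 0" and i: "i \<in> Basis" and nz: "shift_test \<epsilon> u i a z \<noteq> 0"
  shows "norm (z - u) \<le> \<bar>a\<bar> + real DIM('a) * \<epsilon>"
proof -
  define B where "B = (\<lambda>j. if j = i then \<bar>a\<bar> + \<epsilon> else \<epsilon>)"
  have "\<bar>(z - u) \<bullet> j\<bar> \<le> B j" if j: "j \<in> Basis" for j
  proof (cases "j = i")
    case True
    then show ?thesis
      using nz bump_increment_nonzero_imp[OF e] by (force simp: B_def inner_diff_left shift_test_eq[OF i])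
  next
    case False
    then have "bump_scaled \<epsilon> (z \<bullet> j - u \<bullet> j) \<noteq> 0"
      using nz j by (auto simp: shift_test_eq[OF i])
    then show ?thesis
      using False bump_scaled_nonzero_imp[OF e] by (force simp: B_def inner_diff_left)
  qed
  then have "norm (z - u) \<le> (\<Sum>j\<in>Basis. B j)"
    by (rule norm_le_sum_of_coordinate_bounds)
  also have "(\<Sum>j\<in>Basis. B j) = (\<Sum>j\<in>Basis. \<epsilon> + (if j = i then \<bar>a\<bar> else 0))"
    by (intro sum.cong) (auto simp: B_def)
  also have "\<dots> = \<bar>a\<bar> + real DIM('a) * \<epsilon>"
    using i by (simp add: sum.distrib)
  finally show ?thesis .
qed

lemma test_fun_shift_test:
  fixes u :: "'a::euclidean_space"
  assumes e: "\<epsilon> > 0" and "i \<in> Basis"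
  shows "test_fun (shift_test \<epsilon> u i a)"
  unfolding shift_test_def
proof (rule test_fun_tensor_fun[where R = "\<bar>a\<bar> + \<epsilon> + norm u", OF real_smooth_shift_test_factor[OF e]])
  fix j :: 'a and t :: real
  assume j: "j \<in> Basis"
    and "(if j = i then bump_increment \<epsilon> a (t - u \<bullet> i) else bump_scaled \<epsilon> (t - u \<bullet> j)) \<noteq> 0"
  then have "\<bar>t - u \<bullet> j\<bar> \<le> \<bar>a\<bar> + \<epsilon>"
    using bump_increment_nonzero_imp[OF e] bump_scaled_nonzero_imp[OF e]
    by (cases "j = i") (auto, fastforce)
  then show "\<bar>t\<bar> \<le> \<bar>a\<bar> + \<epsilon> + norm u"
    using Basis_le_norm[OF j, of u] by linarith
qed

lemma partial_shift_test:
  fixes u :: "'a::euclidean_space"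
  assumes e: "\<epsilon> > 0" and i: "i \<in> Basis"
  shows "frechet_derivative (shift_test \<epsilon> u i a) (at z) i = mollifier \<epsilon> u z - mollifier \<epsilon> (u + a *\<^sub>R i) z"
proof -
  let ?f = "\<lambda>j t. if j = i then bump_increment \<epsilon> a (t - u \<bullet> i) else bump_scaled \<epsilon> (t - u \<bullet> j)"
  let ?P = "\<Prod>j\<in>Basis - {i}. bump_scaled \<epsilon> (z \<bullet> j - u \<bullet> j)"
  have "((\<lambda>t. bump_increment \<epsilon> a (t - u \<bullet> i)) has_real_derivative
      (bump_scaled \<epsilon> (z \<bullet> i - u \<bullet> i) - bump_scaled \<epsilon> (z \<bullet> i - u \<bullet> i - a)) * 1) (at (z \<bullet> i))"
    by (rule DERIV_chain2[OF has_real_derivative_bump_increment[OF e]]) (auto intro!: derivative_eq_intros)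
  then have "deriv (?f i) (z \<bullet> i) = bump_scaled \<epsilon> (z \<bullet> i - u \<bullet> i) - bump_scaled \<epsilon> (z \<bullet> i - u \<bullet> i - a)"
    by (simp add: DERIV_imp_deriv)
  moreover have "(\<Prod>j\<in>Basis - {i}. ?f j (z \<bullet> j)) = ?P"
    by (intro prod.cong) auto
  ultimately have "frechet_derivative (shift_test \<epsilon> u i a) (at z) i =
     (bump_scaled \<epsilon> (z \<bullet> i - u \<bullet> i) - bump_scaled \<epsilon> (z \<bullet> i - u \<bullet> i - a)) * ?P"
    unfolding shift_test_def
    using frechet_derivative_tensor_fun[of ?f, OF real_smooth_shift_test_factor[OF e] i] by simp
  moreover have "mollifier \<epsilon> u z = bump_scaled \<epsilon> (z \<bullet> i - u \<bullet> i) * ?P"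
    unfolding mollifier_eq using i by (simp add: prod.remove)
  moreover have "(\<Prod>j\<in>Basis - {i}. bump_scaled \<epsilon> (z \<bullet> j - (u + a *\<^sub>R i) \<bullet> j)) = ?P"
    by (intro prod.cong refl) (use i in \<open>auto simp: inner_add_left inner_Basis\<close>)
  then have "mollifier \<epsilon> (u + a *\<^sub>R i) z = bump_scaled \<epsilon> (z \<bullet> i - u \<bullet> i - a) * ?P"
    unfolding mollifier_eq using i by (simp add: prod.remove inner_add_left algebra_simps)
  ultimately show ?thesis by (simp add: algebra_simps)
qed

section \<open>Mollification of a function with a weak gradient\<close>

lemma sum_abs_inner_le_DIM_norm:
  fixes v :: "'a::euclidean_space"
  assumes "B \<subseteq> Basis"
  shows "(\<Sum>b\<in>B. \<bar>v \<bullet> b\<bar>) \<le> real DIM('a) * norm v"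
proof -
  have "(\<Sum>b\<in>B. \<bar>v \<bullet> b\<bar>) \<le> (\<Sum>b\<in>Basis. \<bar>v \<bullet> b\<bar>)"
    by (rule sum_mono2) (use assms in auto)
  also have "\<dots> \<le> (\<Sum>b\<in>(Basis::'a set). norm v)"
    by (intro sum_mono Basis_le_norm)
  finally show ?thesis by simp
qed

lemma abs_diff_le_by_coordinate_steps:
  fixes F :: "'a::euclidean_space \<Rightarrow> real"
  assumes "C \<ge> 0"
    and step: "\<And>w b a. b \<in> Basis \<Longrightarrow> norm (w - x) \<le> real DIM('a) * norm (y - x) \<Longrightarrow>
                 \<bar>a\<bar> \<le> norm (y - x) \<Longrightarrow> \<bar>F w - F (w + a *\<^sub>R b)\<bar> \<le> \<bar>a\<bar> * C"
  shows "\<bar>F x - F y\<bar> \<le> real DIM('a) * norm (y - x) * C"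
proof -
  define v where "v = y - x"
  have partial: "\<bar>F x - F (x + (\<Sum>b\<in>B. (v \<bullet> b) *\<^sub>R b))\<bar> \<le> (\<Sum>b\<in>B. \<bar>v \<bullet> b\<bar>) * C"
    if "finite B" "B \<subseteq> Basis" for B
    using that
  proof (induction B rule: finite_induct)
    case (insert b B)
    define w where "w = x + (\<Sum>b\<in>B. (v \<bullet> b) *\<^sub>R b)"
    have b: "b \<in> Basis" and B: "B \<subseteq> Basis" using insert.prems by auto
    have "norm (w - x) \<le> (\<Sum>b\<in>B. norm ((v \<bullet> b) *\<^sub>R b))"
      unfolding w_def using norm_sum[of "\<lambda>b. (v \<bullet> b) *\<^sub>R b" B] by simp
    also have "\<dots> = (\<Sum>b\<in>B. \<bar>v \<bullet> b\<bar>)"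
      using B by (intro sum.cong) auto
    also have "\<dots> \<le> real DIM('a) * norm (y - x)"
      using sum_abs_inner_le_DIM_norm[OF B] by (simp add: v_def)
    finally have "\<bar>F w - F (w + (v \<bullet> b) *\<^sub>R b)\<bar> \<le> \<bar>v \<bullet> b\<bar> * C"
      using Basis_le_norm[OF b, of v] by (intro step b) (auto simp: v_def)
    moreover have "x + (\<Sum>b\<in>insert b B. (v \<bullet> b) *\<^sub>R b) = w + (v \<bullet> b) *\<^sub>R b"
      unfolding w_def using insert.hyps by (simp add: algebra_simps)
    ultimately show ?case
      using insert.IH[OF B] insert.hyps unfolding w_def by (simp add: algebra_simps)
  qed simp
  have "x + (\<Sum>b\<in>Basis. (v \<bullet> b) *\<^sub>R b) = y"
    unfolding v_def by (simp add: euclidean_representation)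
  then have "\<bar>F x - F y\<bar> \<le> (\<Sum>b\<in>Basis. \<bar>v \<bullet> b\<bar>) * C"
    using partial[OF finite_Basis] by simp
  also have "\<dots> \<le> real DIM('a) * norm v * C"
    by (rule mult_right_mono[OF sum_abs_inner_le_DIM_norm assms(1)]) simp
  finally show ?thesis unfolding v_def .
qed

definition mollify :: "real \<Rightarrow> ('a::euclidean_space \<Rightarrow> real) \<Rightarrow> 'a \<Rightarrow> real" where
  "mollify \<epsilon> \<phi> u = (\<integral>z. \<phi> z * mollifier \<epsilon> u z \<partial>lborel)"

lemma integrable_on_compact_norm_weak_gradient:
  fixes g :: "'a::euclidean_space \<Rightarrow> 'a"
  assumes wg: "weak_gradient \<phi> g" and K: "compact K"
  shows "set_integrable lborel K (\<lambda>z. norm (g z))"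
  unfolding set_integrable_def
proof (rule Bochner_Integration.integrable_bound)
  show "integrable lborel (\<lambda>z. \<Sum>b\<in>Basis. \<bar>indicator K z * (g z \<bullet> b)\<bar>)"
    using wg K unfolding weak_gradient_def set_integrable_def
    by (intro Bochner_Integration.integrable_sum Bochner_Integration.integrable_abs) simp
  have [measurable]: "g \<in> borel_measurable lborel" "K \<in> sets lborel"
    using wg K by (simp_all add: weak_gradient_def compact_imp_closed borel_closed)
  show "(\<lambda>z. indicator K z *\<^sub>R norm (g z)) \<in> borel_measurable lborel"
    by measurable
  show "AE z in lborel. norm (indicator K z *\<^sub>R norm (g z)) \<le> norm (\<Sum>b\<in>Basis. \<bar>indicator K z * (g z \<bullet> b)\<bar>)"
    using norm_le_l1[of "g _"] by (intro AE_I2) (simp add: indicator_def sum_nonneg)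
qed

lemma set_integral_mono_set:
  fixes h :: "'b \<Rightarrow> real"
  assumes "set_integrable M B h" "A \<in> sets M" "A \<subseteq> B" "\<And>x. h x \<ge> 0"
  shows "(\<integral>x\<in>A. h x \<partial>M) \<le> (\<integral>x\<in>B. h x \<partial>M)"
  using assms set_integrable_subset[OF assms(1-3)]
  unfolding set_integrable_def set_lebesgue_integral_def
  by (intro integral_mono) (auto simp: indicator_def)

lemma abs_mollify_diff_shift_le:
  fixes \<phi> :: "'a::euclidean_space \<Rightarrow> real"
  assumes e: "\<epsilon> > 0" and cont: "continuous_on UNIV \<phi>" and wg: "weak_gradient \<phi> g"
    and i: "i \<in> Basis"
  shows "\<bar>mollify \<epsilon> \<phi> u - mollify \<epsilon> \<phi> (u + a *\<^sub>R i)\<bar>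
           \<le> \<bar>a\<bar> * (\<integral>z\<in>cball u (\<bar>a\<bar> + real DIM('a) * \<epsilon>). norm (g z) \<partial>lborel)"
proof -
  define K where "K = cball u (\<bar>a\<bar> + real DIM('a) * \<epsilon>)"
  define \<psi> where "\<psi> = shift_test \<epsilon> u i a"
  have "mollify \<epsilon> \<phi> u - mollify \<epsilon> \<phi> (u + a *\<^sub>R i) =
      (\<integral>z. \<phi> z * mollifier \<epsilon> u z - \<phi> z * mollifier \<epsilon> (u + a *\<^sub>R i) z \<partial>lborel)"
    unfolding mollify_def
    by (rule Bochner_Integration.integral_diff[symmetric, OF integrable_mult_mollifier[OF e cont]
          integrable_mult_mollifier[OF e cont]])
  also have "\<dots> = (\<integral>z. \<phi> z * frechet_derivative \<psi> (at z) i \<partial>lborel)"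
    unfolding \<psi>_def by (simp add: partial_shift_test[OF e i] algebra_simps)
  also have "\<dots> = - (\<integral>z. (g z \<bullet> i) * \<psi> z \<partial>lborel)"
    using wg test_fun_shift_test[OF e i] i unfolding weak_gradient_def \<psi>_def by blast
  finally have eq: "\<bar>mollify \<epsilon> \<phi> u - mollify \<epsilon> \<phi> (u + a *\<^sub>R i)\<bar> = \<bar>\<integral>z. (g z \<bullet> i) * \<psi> z \<partial>lborel\<bar>"
    by simp
  have pointwise: "\<bar>(g z \<bullet> i) * \<psi> z\<bar> \<le> \<bar>a\<bar> * (indicator K z * norm (g z))" for z
  proof (cases "\<psi> z = 0")
    case False
    then have "z \<in> K"
      using shift_test_nonzero_imp[OF e i] unfolding K_def \<psi>_def by (simp add: dist_norm norm_minus_commute)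
    moreover have "\<bar>g z \<bullet> i\<bar> * \<bar>\<psi> z\<bar> \<le> norm (g z) * \<bar>a\<bar>"
      using Basis_le_norm[OF i] abs_shift_test_le[OF e i] unfolding \<psi>_def by (intro mult_mono) auto
    ultimately show ?thesis by (simp add: abs_mult mult.commute)
  qed simp
  have int_K: "integrable lborel (\<lambda>z. \<bar>a\<bar> * (indicator K z * norm (g z)))"
    using integrable_on_compact_norm_weak_gradient[OF wg compact_cball]
    unfolding K_def set_integrable_def by simp
  have [measurable]: "g \<in> borel_measurable lborel" "\<psi> \<in> borel_measurable lborel"
    using wg borel_measurable_continuous_onI[OF continuous_on_shift_test[OF e]]
    by (simp_all add: weak_gradient_def \<psi>_def)
  have "integrable lborel (\<lambda>z. (g z \<bullet> i) * \<psi> z)"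
    by (rule Bochner_Integration.integrable_bound[OF int_K]) (use pointwise in auto)
  then have "\<bar>\<integral>z. (g z \<bullet> i) * \<psi> z \<partial>lborel\<bar> \<le> (\<integral>z. \<bar>a\<bar> * (indicator K z * norm (g z)) \<partial>lborel)"
    using integral_abs_bound_integral[OF _ int_K] pointwise by blast
  also have "\<dots> = \<bar>a\<bar> * (\<integral>z\<in>K. norm (g z) \<partial>lborel)"
    by (simp add: set_lebesgue_integral_def)
  finally show ?thesis unfolding eq K_def .
qed

lemma abs_mollify_diff_le:
  fixes \<phi> :: "'a::euclidean_space \<Rightarrow> real"
  assumes e: "\<epsilon> > 0" and cont: "continuous_on UNIV \<phi>" and wg: "weak_gradient \<phi> g"
  shows "\<bar>mollify \<epsilon> \<phi> x - mollify \<epsilon> \<phi> y\<bar> \<le> real DIM('a) * norm (y - x) *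
           (\<integral>z\<in>cball x ((real DIM('a) + 1) * norm (y - x) + real DIM('a) * \<epsilon>). norm (g z) \<partial>lborel)"
proof (rule abs_diff_le_by_coordinate_steps)
  let ?K = "cball x ((real DIM('a) + 1) * norm (y - x) + real DIM('a) * \<epsilon>)"
  show "0 \<le> (\<integral>z\<in>?K. norm (g z) \<partial>lborel)"
    unfolding set_lebesgue_integral_def by (rule integral_nonneg_AE) (simp add: indicator_def)
  fix w b :: 'a and a :: real
  assume b: "b \<in> Basis" and w: "norm (w - x) \<le> real DIM('a) * norm (y - x)" and a: "\<bar>a\<bar> \<le> norm (y - x)"
  have "dist w x + (\<bar>a\<bar> + real DIM('a) * \<epsilon>) \<le> (real DIM('a) + 1) * norm (y - x) + real DIM('a) * \<epsilon>"
    using w a by (simp add: dist_norm algebra_simps)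
  then have "cball w (\<bar>a\<bar> + real DIM('a) * \<epsilon>) \<subseteq> ?K"
    by (simp add: cball_subset_cball_iff)
  then have "(\<integral>z\<in>cball w (\<bar>a\<bar> + real DIM('a) * \<epsilon>). norm (g z) \<partial>lborel) \<le> (\<integral>z\<in>?K. norm (g z) \<partial>lborel)"
    by (intro set_integral_mono_set[OF integrable_on_compact_norm_weak_gradient[OF wg compact_cball]])
       (auto simp: borel_closed)
  then show "\<bar>mollify \<epsilon> \<phi> w - mollify \<epsilon> \<phi> (w + a *\<^sub>R b)\<bar> \<le> \<bar>a\<bar> * (\<integral>z\<in>?K. norm (g z) \<partial>lborel)"
    using abs_mollify_diff_shift_le[OF e cont wg b, of w a]
    by (meson abs_ge_zero mult_left_mono order_trans)
qed

lemma abs_mollify_error_le: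
  fixes \<phi> :: "'a::euclidean_space \<Rightarrow> real"
  assumes e: "\<epsilon> > 0" and cont: "continuous_on UNIV \<phi>"
    and holder: "\<And>a b. \<bar>\<phi> a - \<phi> b\<bar> \<le> L * norm (a - b) powr \<alpha>" and "L \<ge> 0" and "\<alpha> > 0"
  shows "\<bar>(\<integral>z. mollifier \<epsilon> u z \<partial>lborel) * \<phi> u - mollify \<epsilon> \<phi> u\<bar>
           \<le> L * (real DIM('a) * \<epsilon>) powr \<alpha> * (\<integral>z. mollifier \<epsilon> u z \<partial>lborel)"
proof -
  define C where "C = L * (real DIM('a) * \<epsilon>) powr \<alpha>"
  have int: "integrable lborel (mollifier \<epsilon> u)"
    using integrable_mult_mollifier[OF e, of "\<lambda>_. 1" u] by simp
  have int_diff: "integrable lborel (\<lambda>z. (\<phi> u - \<phi> z) * mollifier \<epsilon> u z)"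
    by (rule integrable_mult_mollifier[OF e]) (use cont in \<open>auto intro!: continuous_intros\<close>)
  have "(\<integral>z. mollifier \<epsilon> u z \<partial>lborel) * \<phi> u - mollify \<epsilon> \<phi> u
      = (\<integral>z. (\<phi> u - \<phi> z) * mollifier \<epsilon> u z \<partial>lborel)"
    unfolding mollify_def left_diff_distrib
    using int integrable_mult_mollifier[OF e cont]
    by (simp add: Bochner_Integration.integral_diff mult.commute)
  also have "\<bar>\<dots>\<bar> \<le> (\<integral>z. C * mollifier \<epsilon> u z \<partial>lborel)"
  proof (rule integral_abs_bound_integral[OF int_diff])
    show "integrable lborel (\<lambda>z. C * mollifier \<epsilon> u z)" using int by simp
    fix z
    show "\<bar>(\<phi> u - \<phi> z) * mollifier \<epsilon> u z\<bar> \<le> C * mollifier \<epsilon> u z"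
    proof (cases "mollifier \<epsilon> u z = 0")
      case False
      then have "norm (u - z) powr \<alpha> \<le> (real DIM('a) * \<epsilon>) powr \<alpha>"
        using mollifier_nonzero_imp[OF e False] assms(5) by (intro powr_mono2) (auto simp: norm_minus_commute)
      then have "\<bar>\<phi> u - \<phi> z\<bar> \<le> C"
        unfolding C_def using holder[of u z] assms(4) by (meson mult_left_mono order_trans)
      then show ?thesis
        using mollifier_nonneg[of \<epsilon> u z] by (simp add: abs_mult mult_right_mono)
    qed simp
  qed
  finally show ?thesis unfolding C_def by simp
qed

lemma abs_diff_le_weak_gradient_estimate:
  fixes \<phi> :: "'a::euclidean_space \<Rightarrow> real"
  assumes e: "\<epsilon> > 0" and cont: "continuous_on UNIV \<phi>" and wg: "weak_gradient \<phi> g"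
    and holder: "\<And>a b. \<bar>\<phi> a - \<phi> b\<bar> \<le> L * norm (a - b) powr \<alpha>" and L: "L \<ge> 0" and \<alpha>: "\<alpha> > 0"
  shows "\<bar>\<phi> x - \<phi> y\<bar> \<le> 2 * L * (real DIM('a) * \<epsilon>) powr \<alpha> +
     real DIM('a) * norm (y - x) *
       (\<integral>z\<in>cball x ((real DIM('a) + 1) * norm (y - x) + real DIM('a) * \<epsilon>). norm (g z) \<partial>lborel) /
       (exp (-4) ^ DIM('a) * measure lborel (ball (0::'a) (\<epsilon>/2)))"
proof -
  define c where "c = (\<integral>z. mollifier \<epsilon> (0::'a) z \<partial>lborel)"
  define c0 where "c0 = exp (-4::real) ^ DIM('a) * measure lborel (ball (0::'a) (\<epsilon>/2))"
  define P where "P = real DIM('a) * norm (y - x) *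
    (\<integral>z\<in>cball x ((real DIM('a) + 1) * norm (y - x) + real DIM('a) * \<epsilon>). norm (g z) \<partial>lborel)"
  define C where "C = L * (real DIM('a) * \<epsilon>) powr \<alpha>"
  have c0: "c0 > 0" "c0 \<le> c"
    unfolding c0_def c_def using content_ball_pos[of "\<epsilon>/2" "0::'a"] e integral_mollifier_ge[OF e] by auto
  have "P \<ge> 0"
    unfolding P_def set_lebesgue_integral_def by (intro mult_nonneg_nonneg integral_nonneg_AE) auto
  have "\<bar>c * \<phi> x - mollify \<epsilon> \<phi> x\<bar> \<le> C * c" "\<bar>c * \<phi> y - mollify \<epsilon> \<phi> y\<bar> \<le> C * c"
    using abs_mollify_error_le[OF e cont holder L \<alpha>] integral_mollifier_translate
    unfolding c_def C_def by metis+
  moreover have "\<bar>mollify \<epsilon> \<phi> x - mollify \<epsilon> \<phi> y\<bar> \<le> P"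
    unfolding P_def by (rule abs_mollify_diff_le[OF e cont wg])
  moreover have "\<bar>c * \<phi> x - c * \<phi> y\<bar> = c * \<bar>\<phi> x - \<phi> y\<bar>"
    using c0 by (simp add: right_diff_distrib[symmetric] abs_mult)
  ultimately have "c * \<bar>\<phi> x - \<phi> y\<bar> \<le> 2 * C * c + P"
    by linarith
  then have "\<bar>\<phi> x - \<phi> y\<bar> \<le> 2 * C + P / c"
    using c0 by (simp add: field_simps)
  also have "P / c \<le> P / c0"
    using \<open>P \<ge> 0\<close> c0 by (simp add: divide_left_mono)
  finally show ?thesis unfolding C_def P_def c0_def by simp
qed

section \<open>Integrals over shrinking families of sets\<close>

lemma eventually_nn_integral_indicator_less:
  fixes f :: "'b \<Rightarrow> ennreal" and A :: "real \<Rightarrow> 'b set"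
  assumes f: "f \<in> borel_measurable M" "(\<integral>\<^sup>+x. f x \<partial>M) < \<infinity>"
    and A: "\<And>t. A t \<in> sets M" "\<And>s t. s \<le> t \<Longrightarrow> A t \<subseteq> A s"
    and escape: "\<And>x. x \<in> space M \<Longrightarrow> f x = 0 \<or> (\<exists>t. x \<notin> A t)"
    and "e > 0"
  shows "\<forall>\<^sub>F t in at_top. (\<integral>\<^sup>+x. f x * indicator (A t) x \<partial>M) < e"
proof -
  define F where "F = (\<lambda>n::nat. \<lambda>x. f x * indicator (A (real n)) x)"
  have "decseq F"
  proof (intro antimonoI le_funI)
    fix m n :: nat and x assume "m \<le> n"
    then have "A (real n) \<subseteq> A (real m)" using A(2) by simp
    then show "F n x \<le> F m x" unfolding F_def by (cases "x \<in> A (real n)") auto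
  qed
  moreover have "F n \<in> borel_measurable M" for n
    unfolding F_def using f(1) A(1) by measurable
  moreover have "(\<integral>\<^sup>+ x. F n x \<partial>M) < \<infinity>" for n
  proof -
    have "(\<integral>\<^sup>+ x. F n x \<partial>M) \<le> (\<integral>\<^sup>+ x. f x \<partial>M)"
      unfolding F_def by (intro nn_integral_mono) (auto simp: indicator_def)
    then show ?thesis using f(2) by (rule le_less_trans)
  qed
  moreover have "(\<integral>\<^sup>+ x. (INF n. F n x) \<partial>M) = 0"
  proof -
    have "(INF n. F n x) = 0" if x: "x \<in> space M" for x
    proof -
      consider "f x = 0" | t where "x \<notin> A t" using escape[OF x] by blast
      then show ?thesis
      proof cases
        case 2
        obtain n :: nat where "real n \<ge> t" using real_arch_simple by blast
        then have "x \<notin> A (real n)" using 2 A(2) by blast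
        then have "F n x = 0" by (simp add: F_def)
        then show ?thesis by (metis INF_lower2 UNIV_I le_zero_eq order_refl)
      qed (simp add: F_def)
    qed
    then have "(\<integral>\<^sup>+ x. (INF n. F n x) \<partial>M) = (\<integral>\<^sup>+ x. 0 \<partial>M)"
      by (intro nn_integral_cong) auto
    then show ?thesis by simp
  qed
  ultimately have "(INF n. integral\<^sup>N M (F n)) = 0"
    using nn_integral_monotone_convergence_INF_decseq by metis
  then obtain n where n: "integral\<^sup>N M (F n) < e"
    using \<open>e > 0\<close> by (metis INF_less_iff)
  show ?thesis
    unfolding eventually_at_top_linorder
  proof (intro exI allI impI)
    fix t assume "real n \<le> t"
    then have "(\<integral>\<^sup>+x. f x * indicator (A t) x \<partial>M) \<le> integral\<^sup>N M (F n)"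
      unfolding F_def using A(2)[of "real n" t] by (intro nn_integral_mono) (auto simp: indicator_def)
    then show "(\<integral>\<^sup>+x. f x * indicator (A t) x \<partial>M) < e" using n by simp
  qed
qed

lemma eventually_set_integral_less:
  fixes h :: "'b \<Rightarrow> real" and A :: "real \<Rightarrow> 'b set"
  assumes h: "integrable M h" "\<And>x. h x \<ge> 0"
    and A: "\<And>t. A t \<in> sets M" "\<And>s t. s \<le> t \<Longrightarrow> A t \<subseteq> A s"
    and escape: "\<And>x. x \<in> space M \<Longrightarrow> h x = 0 \<or> (\<exists>t. x \<notin> A t)"
    and "e > 0"
  shows "\<forall>\<^sub>F t in at_top. (\<integral>x\<in>A t. h x \<partial>M) < e"
proof -
  have "\<forall>\<^sub>F t in at_top. (\<integral>\<^sup>+x. ennreal (h x) * indicator (A t) x \<partial>M) < ennreal e"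
    using h A escape \<open>e > 0\<close>
    by (intro eventually_nn_integral_indicator_less)
       (auto simp: nn_integral_eq_integral borel_measurable_integrable)
  then show ?thesis
  proof eventually_elim
    case (elim t)
    have "(\<integral>\<^sup>+x. ennreal (h x) * indicator (A t) x \<partial>M) = ennreal (\<integral>x\<in>A t. h x \<partial>M)"
      unfolding set_lebesgue_integral_def
      using integrable_real_mult_indicator[OF A(1) h(1)] h(2)
      by (subst nn_integral_eq_integral[symmetric]) (auto intro!: nn_integral_cong simp: indicator_def mult.commute)
    moreover have "(\<integral>x\<in>A t. h x \<partial>M) \<ge> 0"
      unfolding set_lebesgue_integral_def by (rule integral_nonneg_AE) (simp add: h(2))
    ultimately show ?case using elim by (simp add: ennreal_less_iff)
  qed
qed

lemma eventually_set_integral_superlevel_less: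
  fixes h :: "'b \<Rightarrow> real"
  assumes h: "integrable M h" "\<And>x. h x \<ge> 0" and "e > 0"
  shows "\<forall>\<^sub>F t in at_top. (\<integral>x\<in>{x \<in> space M. t \<le> h x}. h x \<partial>M) < e"
proof (rule eventually_set_integral_less[OF h])
  note borel_measurable_integrable[OF h(1), measurable]
  show "{x \<in> space M. t \<le> h x} \<in> sets M" for t
    by measurable
  show "h x = 0 \<or> (\<exists>t. x \<notin> {x \<in> space M. t \<le> h x})" for x
  proof -
    have "x \<notin> {x \<in> space M. h x + 1 \<le> h x}" by simp
    then show ?thesis by blast
  qed
qed (use \<open>e > 0\<close> in auto)

lemma set_integral_le_on_small_sets:
  fixes h :: "'b \<Rightarrow> real"
  assumes h: "integrable M h" "\<And>x. h x \<ge> 0" and "\<theta> > 0"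
  obtains \<eta> where "\<eta> > 0"
    and "\<And>K. K \<in> fmeasurable M \<Longrightarrow> measure M K \<le> \<eta> \<Longrightarrow> (\<integral>x\<in>K. h x \<partial>M) \<le> \<theta>"
proof -
  define A where "A t = {x \<in> space M. t \<le> h x}" for t
  have "\<forall>\<^sub>F t in at_top. (\<integral>x\<in>A t. h x \<partial>M) < \<theta>/2"
    unfolding A_def using \<open>\<theta> > 0\<close> by (intro eventually_set_integral_superlevel_less[OF h]) simp
  then obtain T0 where T0: "\<And>t. t \<ge> T0 \<Longrightarrow> (\<integral>x\<in>A t. h x \<partial>M) < \<theta>/2"
    by (auto simp: eventually_at_top_linorder)
  define T where "T = max T0 1"
  have T: "T > 0" "(\<integral>x\<in>A T. h x \<partial>M) < \<theta>/2"
    using T0[of T] by (auto simp: T_def)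
  show ?thesis
  proof
    show "\<theta> / (2 * T) > 0" using \<open>\<theta> > 0\<close> T by simp
    fix K assume K: "K \<in> fmeasurable M" "measure M K \<le> \<theta> / (2 * T)"
    have int: "integrable M (\<lambda>x. T * indicator K x + indicator (A T) x * h x)"
      using K(1) h(1) integrable_real_mult_indicator[of "A T" M h]
      by (auto simp: A_def fmeasurable_def mult.commute intro!: integrable_real_indicator)
    have "K \<in> sets M" using K(1) by (simp add: fmeasurable_def)
    have "(\<integral>x\<in>K. h x \<partial>M) \<le> (\<integral>x. T * indicator K x + indicator (A T) x * h x \<partial>M)"
      unfolding set_lebesgue_integral_def
    proof (rule integral_mono[OF _ int])
      show "integrable M (\<lambda>x. indicator K x *\<^sub>R h x)"
        using integrable_real_mult_indicator[OF \<open>K \<in> sets M\<close> h(1)] by (simp add: mult.commute)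
      show "indicator K x *\<^sub>R h x \<le> T * indicator K x + indicator (A T) x * h x" if "x \<in> space M" for x
        using that T(1) h(2)[of x] by (auto simp: A_def indicator_def)
    qed
    also have "\<dots> = T * measure M K + (\<integral>x\<in>A T. h x \<partial>M)"
      using int K(1) integrable_real_mult_indicator[of "A T" M h] h(1)
      by (subst Bochner_Integration.integral_add)
         (auto simp: set_lebesgue_integral_def A_def fmeasurable_def mult.commute intro!: integrable_real_indicator)
    also have "\<dots> \<le> \<theta>"
      using K(2) T by (simp add: field_simps)
    finally show "(\<integral>x\<in>K. h x \<partial>M) \<le> \<theta>" .
  qed
qed

section \<open>Mass of an \<open>L\<^sup>p\<close> function on balls\<close>

lemma le_powr_plus:
  fixes t c p :: real
  assumes "t \<ge> 0" and "c > 0" and "p \<ge> 1"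
  shows "t \<le> c powr (1 - p) * t powr p + c"
proof (cases "t \<le> c")
  case True
  then show ?thesis using assms by (simp add: add_increasing)
next
  case False
  then have t: "t > c" by simp
  have "t powr p = t powr ((p - 1) + 1)" by simp
  also have "\<dots> = t powr (p - 1) * t powr 1" by (rule powr_add)
  finally have tp: "t powr p = t powr (p - 1) * t"
    using t assms by simp
  have "c powr (1 - p) * c powr (p - 1) = 1"
    using assms by (simp add: powr_add[symmetric])
  moreover have "c powr (1 - p) * c powr (p - 1) \<le> c powr (1 - p) * t powr (p - 1)"
    using t assms by (intro mult_left_mono powr_mono2) auto
  ultimately have "t \<le> (c powr (1 - p) * t powr (p - 1)) * t"
    using t assms by (simp add: mult_le_cancel_right1)
  then show ?thesis
    using tp assms by (simp add: mult.assoc add_increasing2)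
qed

lemma set_integral_le_powr_plus:
  fixes f :: "'b \<Rightarrow> real"
  assumes f: "f \<in> borel_measurable M" "\<And>x. f x \<ge> 0" "integrable M (\<lambda>x. f x powr p)"
    and "p \<ge> 1" and K: "K \<in> fmeasurable M" and "c > 0"
  shows "set_integrable M K f"
    and "(\<integral>x\<in>K. f x \<partial>M) \<le> c powr (1 - p) * (\<integral>x\<in>K. f x powr p \<partial>M) + c * measure M K"
proof -
  have Ks: "K \<in> sets M" and "emeasure M K < \<infinity>" using K by (auto simp: fmeasurable_def)
  define B where "B x = c powr (1 - p) * (indicator K x * f x powr p) + c * indicator K x" for x
  have intB: "integrable M B"
    unfolding B_def using integrable_real_mult_indicator[OF Ks f(3)] \<open>emeasure M K < \<infinity>\<close> Ks
    by (intro Bochner_Integration.integrable_add integrable_mult_right integrable_real_indicator)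
       (auto simp: mult.commute)
  have pointwise: "indicator K x * f x \<le> B x" for x
    using le_powr_plus[OF f(2) \<open>c > 0\<close> \<open>p \<ge> 1\<close>, of x] by (simp add: B_def indicator_def)
  show int: "set_integrable M K f"
    unfolding set_integrable_def
  proof (rule Bochner_Integration.integrable_bound[OF intB])
    show "(\<lambda>x. indicator K x *\<^sub>R f x) \<in> borel_measurable M"
      by (rule borel_measurable_scaleR[OF borel_measurable_indicator[OF Ks] f(1)])
    show "AE x in M. norm (indicator K x *\<^sub>R f x) \<le> norm (B x)"
    proof (rule AE_I2)
      fix x
      have "0 \<le> indicator K x * f x" using f(2)[of x] by simp
      then show "norm (indicator K x *\<^sub>R f x) \<le> norm (B x)"
        using pointwise[of x] by simp
    qed
  qed
  have "(\<integral>x\<in>K. f x \<partial>M) \<le> integral\<^sup>L M B"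
    using int intB pointwise unfolding set_lebesgue_integral_def set_integrable_def
    by (intro integral_mono) auto
  also have "\<dots> = c powr (1 - p) * (\<integral>x\<in>K. f x powr p \<partial>M) + c * measure M K"
    unfolding B_def set_lebesgue_integral_def
    using integrable_real_mult_indicator[OF Ks f(3)] \<open>emeasure M K < \<infinity>\<close> Ks
    by (subst Bochner_Integration.integral_add)
       (auto simp: mult.commute intro!: integrable_mult_right integrable_real_indicator)
  finally show "(\<integral>x\<in>K. f x \<partial>M) \<le> c powr (1 - p) * (\<integral>x\<in>K. f x powr p \<partial>M) + c * measure M K" .
qed

lemma measure_cball_eq_unit_ball:
  "r \<ge> 0 \<Longrightarrow> measure lborel (cball (x::'a::euclidean_space) r) = measure lborel (ball (0::'a) 1) * r ^ DIM('a)"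
  using content_cball_conv_ball[of x r] content_ball_conv_unit_ball[of r x] by simp

lemma set_integral_le_if_powr_set_integral_le:
  fixes f :: "'a::euclidean_space \<Rightarrow> real"
  assumes f: "f \<in> borel_measurable lborel" "\<And>x. f x \<ge> 0" "integrable lborel (\<lambda>x. f x powr p)"
    and p: "p > 1" and "\<Lambda> > 0" and "e > 0"
  obtains \<theta> where "\<theta> > 0"
    and "\<And>K x r. compact K \<Longrightarrow> K \<subseteq> cball x (\<Lambda> * r) \<Longrightarrow> r > 0 \<Longrightarrow>
           (\<integral>z\<in>K. f z powr p \<partial>lborel) \<le> \<theta> \<Longrightarrow>
           (\<integral>z\<in>K. f z \<partial>lborel) \<le> e * r powr (real DIM('a) - real DIM('a) / p)"
proof -
  define N where "N = real DIM('a)"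
  define V where "V = measure lborel (ball (0::'a) 1)"
  have V: "V > 0" unfolding V_def using content_ball_pos[of 1 "0::'a"] by simp
  define \<kappa> where "\<kappa> = e / (2 * V * \<Lambda> ^ DIM('a))"
  have \<kappa>: "\<kappa> > 0" unfolding \<kappa>_def using assms V by simp
  show ?thesis
  proof
    show "e / 2 * \<kappa> powr (p - 1) > 0" using \<open>e > 0\<close> \<kappa> by simp
    fix K x r
    assume K: "compact K" "K \<subseteq> cball x (\<Lambda> * r)" and r: "r > 0"
      and small: "(\<integral>z\<in>K. f z powr p \<partial>lborel) \<le> e / 2 * \<kappa> powr (p - 1)"
    define c where "c = \<kappa> * r powr (- (N / p))"
    have c: "c > 0" unfolding c_def using \<kappa> r by simp
    have "measure lborel K \<le> measure lborel (cball x (\<Lambda> * r))"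
      using K by (intro measure_mono_fmeasurable) (auto simp: fmeasurable_compact compact_imp_closed borel_closed)
    also have "\<dots> = V * (\<Lambda> * r) ^ DIM('a)"
      unfolding V_def using \<open>\<Lambda> > 0\<close> r by (simp add: measure_cball_eq_unit_ball)
    finally have measure_K: "measure lborel K \<le> V * (\<Lambda> * r) ^ DIM('a)" .
    have "(\<integral>z\<in>K. f z \<partial>lborel) \<le> c powr (1 - p) * (\<integral>z\<in>K. f z powr p \<partial>lborel) + c * measure lborel K"
      using K(1) p c by (intro set_integral_le_powr_plus(2)[OF f]) (auto simp: fmeasurable_compact)
    also have "c powr (1 - p) * (\<integral>z\<in>K. f z powr p \<partial>lborel) \<le> e / 2 * r powr (N - N / p)"
    proof -
      have "c powr (1 - p) = \<kappa> powr (1 - p) * r powr (N - N / p)"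
      proof -
        have "- (N / p) * (1 - p) = N - N / p" using p by (simp add: field_simps)
        then show ?thesis
          unfolding c_def using \<kappa> r by (simp add: powr_mult powr_powr)
      qed
      then have "c powr (1 - p) * (e / 2 * \<kappa> powr (p - 1))
          = e / 2 * r powr (N - N / p) * (\<kappa> powr (1 - p) * \<kappa> powr (p - 1))"
        by (simp add: ac_simps)
      also have "\<kappa> powr (1 - p) * \<kappa> powr (p - 1) = 1"
        using \<kappa> by (simp add: powr_add[symmetric])
      finally have "c powr (1 - p) * (e / 2 * \<kappa> powr (p - 1)) = e / 2 * r powr (N - N / p)"
        by simp
      moreover have "c powr (1 - p) * (\<integral>z\<in>K. f z powr p \<partial>lborel) \<le> c powr (1 - p) * (e / 2 * \<kappa> powr (p - 1))"
        by (rule mult_left_mono[OF small]) simp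
      ultimately show ?thesis by linarith
    qed
    also have "c * measure lborel K \<le> e / 2 * r powr (N - N / p)"
    proof -
      have "c * measure lborel K \<le> c * (V * (\<Lambda> * r) ^ DIM('a))"
        using measure_K c by (intro mult_left_mono) auto
      also have "\<dots> = \<kappa> * V * \<Lambda> ^ DIM('a) * (r powr (- (N / p)) * r powr N)"
        unfolding c_def N_def using r by (simp add: power_mult_distrib powr_realpow)
      also have "\<dots> = e / 2 * r powr (N - N / p)"
        unfolding \<kappa>_def using V \<open>\<Lambda> > 0\<close> by (simp add: powr_add[symmetric])
      finally show ?thesis .
    qed
    finally show "(\<integral>z\<in>K. f z \<partial>lborel) \<le> e * r powr (real DIM('a) - real DIM('a) / p)"
      unfolding N_def by simp
  qed
qed

lemma set_integral_small_cballs_le: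
  fixes h :: "'a::euclidean_space \<Rightarrow> real"
  assumes h: "integrable lborel h" "\<And>x. h x \<ge> 0" and "\<Lambda> > 0" and "\<theta> > 0"
  obtains \<delta> where "\<delta> > 0" and "\<And>x r. 0 < r \<Longrightarrow> r < \<delta> \<Longrightarrow> (\<integral>z\<in>cball x (\<Lambda> * r). h z \<partial>lborel) \<le> \<theta>"
proof -
  obtain \<eta> where \<eta>: "\<eta> > 0"
    and small: "\<And>K. K \<in> fmeasurable lborel \<Longrightarrow> measure lborel K \<le> \<eta> \<Longrightarrow> (\<integral>x\<in>K. h x \<partial>lborel) \<le> \<theta>"
    using set_integral_le_on_small_sets[OF h \<open>\<theta> > 0\<close>] by blast
  define V where "V = measure lborel (ball (0::'a) 1)"
  have V: "V > 0" unfolding V_def using content_ball_pos[of 1 "0::'a"] by simp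
  define \<delta> where "\<delta> = (\<eta> / V) powr (1 / DIM('a)) / \<Lambda>"
  have "\<delta> > 0" unfolding \<delta>_def using \<eta> V \<open>\<Lambda> > 0\<close> by simp
  have "(\<Lambda> * \<delta>) ^ DIM('a) = ((\<eta> / V) powr (1 / DIM('a))) powr (real DIM('a))"
    unfolding \<delta>_def using \<eta> V \<open>\<Lambda> > 0\<close> by (simp add: powr_realpow)
  also have "\<dots> = \<eta> / V"
    using \<eta> V by (simp add: powr_powr)
  finally have \<Lambda>\<delta>: "V * (\<Lambda> * \<delta>) ^ DIM('a) = \<eta>"
    using V by simp
  show ?thesis
  proof (rule that[OF \<open>\<delta> > 0\<close>])
    fix x :: 'a and r :: real assume r: "0 < r" "r < \<delta>"
    have "measure lborel (cball x (\<Lambda> * r)) = V * (\<Lambda> * r) ^ DIM('a)"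
      unfolding V_def using r \<open>\<Lambda> > 0\<close> by (simp add: measure_cball_eq_unit_ball)
    also have "\<dots> \<le> V * (\<Lambda> * \<delta>) ^ DIM('a)"
      using r V \<open>\<Lambda> > 0\<close> by (intro mult_left_mono power_mono) auto
    finally show "(\<integral>z\<in>cball x (\<Lambda> * r). h z \<partial>lborel) \<le> \<theta>"
      using \<Lambda>\<delta> by (intro small) (auto simp: fmeasurable_compact)
  qed
qed

lemma eventually_set_integral_norm_ge_less:
  fixes h :: "'a::euclidean_space \<Rightarrow> real"
  assumes "integrable lborel h" "\<And>x. h x \<ge> 0" and "\<theta> > 0"
  shows "\<forall>\<^sub>F t in at_top. (\<integral>z\<in>{z. t \<le> norm z}. h z \<partial>lborel) < \<theta>"
proof (rule eventually_set_integral_less[OF assms(1,2)])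
  show "{z. t \<le> norm z} \<in> sets lborel" for t :: real
    by (simp add: borel_closed closed_Collect_le)
  show "h z = 0 \<or> (\<exists>t. z \<notin> {z. t \<le> norm z})" for z :: 'a
    using gt_ex[of "norm z"] by (auto simp: not_le)
qed (use \<open>\<theta> > 0\<close> in auto)

lemma set_integral_far_cballs_le:
  fixes h :: "'a::euclidean_space \<Rightarrow> real"
  assumes h: "integrable lborel h" "\<And>x. h x \<ge> 0" and "\<theta> > 0"
  obtains M where "\<And>x \<rho>. \<rho> \<le> R \<Longrightarrow> M < norm x \<Longrightarrow> (\<integral>z\<in>cball x \<rho>. h z \<partial>lborel) \<le> \<theta>"
proof -
  obtain T where "\<And>t. T \<le> t \<Longrightarrow> (\<integral>z\<in>{z. t \<le> norm z}. h z \<partial>lborel) < \<theta>"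
    using eventually_set_integral_norm_ge_less[OF h \<open>\<theta> > 0\<close>] by (auto simp: eventually_at_top_linorder)
  then have T: "(\<integral>z\<in>{z. T \<le> norm z}. h z \<partial>lborel) < \<theta>" by simp
  have "{z::'a. T \<le> norm z} \<in> sets lborel"
    by (simp add: borel_closed closed_Collect_le)
  then have int: "set_integrable lborel {z::'a. T \<le> norm z} h"
    unfolding set_integrable_def by (rule integrable_mult_indicator[OF _ h(1)])
  show ?thesis
  proof
    fix x :: 'a and \<rho> assume "\<rho> \<le> R" "T + R < norm x"
    have "cball x \<rho> \<subseteq> {z. T \<le> norm z}"
    proof
      fix z assume "z \<in> cball x \<rho>"
      then have "norm (x - z) \<le> \<rho>" by (simp add: dist_norm)
      moreover have "norm x \<le> norm z + norm (x - z)" by (rule norm_triangle_sub)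
      ultimately show "z \<in> {z. T \<le> norm z}"
        using \<open>\<rho> \<le> R\<close> \<open>T + R < norm x\<close> by simp
    qed
    then have "(\<integral>z\<in>cball x \<rho>. h z \<partial>lborel) \<le> (\<integral>z\<in>{z. T \<le> norm z}. h z \<partial>lborel)"
      by (intro set_integral_mono_set[OF int _ _ h(2)]) auto
    then show "(\<integral>z\<in>cball x \<rho>. h z \<partial>lborel) \<le> \<theta>" using T by simp
  qed
qed

lemma set_integral_le_Int_plus:
  fixes f :: "'b \<Rightarrow> real"
  assumes "set_integrable M K f" "set_integrable M (K \<inter> A) f" "set_integrable M B f"
    and "K - A \<subseteq> B" and "\<And>x. f x \<ge> 0"
  shows "(\<integral>x\<in>K. f x \<partial>M) \<le> (\<integral>x\<in>K \<inter> A. f x \<partial>M) + (\<integral>x\<in>B. f x \<partial>M)"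
proof -
  have "(\<integral>x\<in>K. f x \<partial>M) \<le> (\<integral>x. indicator (K \<inter> A) x * f x + indicator B x * f x \<partial>M)"
    unfolding set_lebesgue_integral_def
    using assms(1-3) unfolding set_integrable_def
    by (intro integral_mono) (use assms(4,5) in \<open>auto simp: indicator_def\<close>)
  also have "\<dots> = (\<integral>x\<in>K \<inter> A. f x \<partial>M) + (\<integral>x\<in>B. f x \<partial>M)"
    using assms(2,3) unfolding set_integrable_def set_lebesgue_integral_def
    by (subst Bochner_Integration.integral_add) auto
  finally show ?thesis .
qed

lemma set_integral_large_cballs_le:
  fixes f :: "'a::euclidean_space \<Rightarrow> real"
  assumes f: "f \<in> borel_measurable lborel" "\<And>x. f x \<ge> 0" "integrable lborel (\<lambda>x. f x powr p)"
    and p: "p > 1" and \<Lambda>: "\<Lambda> > 0" and e: "e > 0"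
  obtains R where "\<And>x r. R < r \<Longrightarrow>
    (\<integral>z\<in>cball x (\<Lambda> * r). f z \<partial>lborel) \<le> e * r powr (real DIM('a) - real DIM('a) / p)"
proof -
  let ?\<beta> = "real DIM('a) - real DIM('a) / p"
  have "real DIM('a) * 1 < real DIM('a) * p"
    using p by (intro mult_strict_left_mono) auto
  then have "?\<beta> > 0"
    using p by (simp add: divide_less_eq)
  obtain \<theta> where "\<theta> > 0" and mass: "\<And>K x r. compact K \<Longrightarrow> K \<subseteq> cball x (\<Lambda> * r) \<Longrightarrow> r > 0 \<Longrightarrow>
      (\<integral>z\<in>K. f z powr p \<partial>lborel) \<le> \<theta> \<Longrightarrow> (\<integral>z\<in>K. f z \<partial>lborel) \<le> e / 2 * r powr ?\<beta>"
    using set_integral_le_if_powr_set_integral_le[OF f p \<Lambda> half_gt_zero[OF e]] by blast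
  obtain T where "\<And>t. T \<le> t \<Longrightarrow> (\<integral>z\<in>{z. t \<le> norm z}. f z powr p \<partial>lborel) < \<theta>"
    using eventually_set_integral_norm_ge_less[OF f(3) _ \<open>\<theta> > 0\<close>]
    by (auto simp: eventually_at_top_linorder)
  then have T: "(\<integral>z\<in>{z. T \<le> norm z}. f z powr p \<partial>lborel) < \<theta>" by simp
  define A where "A = {z::'a. T \<le> norm z}"
  have "closed A" unfolding A_def by (intro closed_Collect_le continuous_intros)
  have int_f: "set_integrable lborel S f" if "compact S" for S
    by (rule set_integral_le_powr_plus(1)[OF f _ _ zero_less_one])
       (use that p in \<open>auto simp: fmeasurable_compact\<close>)
  define C where "C = (\<integral>z\<in>cball 0 T. f z \<partial>lborel)"
  have "C \<ge> 0"
    unfolding C_def set_lebesgue_integral_def by (rule integral_nonneg_AE) (simp add: f(2))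
  show ?thesis
  proof
    fix x :: 'a and r :: real
    assume r: "(2 * C / e + 1) powr (1 / ?\<beta>) < r"
    define K where "K = cball x (\<Lambda> * r)"
    have KA: "compact (K \<inter> A)"
      unfolding K_def using \<open>closed A\<close> by (simp add: compact_Int_closed)
    have "r > 0" using r powr_ge_zero[of "2 * C / e + 1" "1 / ?\<beta>"] by linarith
    have "K - A \<subseteq> cball 0 T" by (auto simp: A_def)
    then have "(\<integral>z\<in>K. f z \<partial>lborel) \<le> (\<integral>z\<in>K \<inter> A. f z \<partial>lborel) + C"
      unfolding C_def K_def using int_f[OF compact_cball] int_f[OF KA]
      by (intro set_integral_le_Int_plus f(2)) (auto simp: K_def)
    also have "(\<integral>z\<in>K \<inter> A. f z \<partial>lborel) \<le> e / 2 * r powr ?\<beta>"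
    proof (rule mass[OF KA _ \<open>r > 0\<close>])
      show "K \<inter> A \<subseteq> cball x (\<Lambda> * r)" unfolding K_def by auto
      have "set_integrable lborel A (\<lambda>z. f z powr p)"
        using \<open>closed A\<close> unfolding set_integrable_def
        by (intro integrable_mult_indicator f(3)) (simp add: borel_closed)
      then have "(\<integral>z\<in>K \<inter> A. f z powr p \<partial>lborel) \<le> (\<integral>z\<in>A. f z powr p \<partial>lborel)"
        using KA by (intro set_integral_mono_set) (auto simp: borel_closed compact_imp_closed)
      then show "(\<integral>z\<in>K \<inter> A. f z powr p \<partial>lborel) \<le> \<theta>"
        using T unfolding A_def by simp
    qed
    also have "C \<le> e / 2 * r powr ?\<beta>"
    proof -
      have "((2 * C / e + 1) powr (1 / ?\<beta>)) powr ?\<beta> < r powr ?\<beta>"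
        using r \<open>?\<beta> > 0\<close> by (intro powr_less_mono2) auto
      then have "2 * C / e + 1 < r powr ?\<beta>"
        using \<open>C \<ge> 0\<close> e \<open>?\<beta> > 0\<close> by (simp add: powr_powr add_nonneg_pos)
      then show ?thesis using e by (simp add: field_simps)
    qed
    finally show "(\<integral>z\<in>K. f z \<partial>lborel) \<le> e * r powr ?\<beta>" by simp
  qed
qed

lemma set_integral_cball_le_off_compact:
  fixes f :: "'a::euclidean_space \<Rightarrow> real"
  assumes f: "f \<in> borel_measurable lborel" "\<And>x. f x \<ge> 0" "integrable lborel (\<lambda>x. f x powr p)"
    and p: "p > 1" and \<Lambda>: "\<Lambda> > 0" and e: "e > 0"
  shows "\<exists>\<delta>>0. \<exists>M. \<forall>x r. 0 < r \<longrightarrow> (r < \<delta> \<or> 1/\<delta> < r \<or> M < norm x) \<longrightarrow>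
           (\<integral>z\<in>cball x (\<Lambda> * r). f z \<partial>lborel) \<le> e * r powr (real DIM('a) - real DIM('a) / p)"
proof -
  have h: "integrable lborel (\<lambda>z. f z powr p)" "\<And>z. f z powr p \<ge> 0"
    by (fact f(3)) simp
  obtain \<theta> where "\<theta> > 0" and mass: "\<And>K x r. compact K \<Longrightarrow> K \<subseteq> cball x (\<Lambda> * r) \<Longrightarrow> r > 0 \<Longrightarrow>
      (\<integral>z\<in>K. f z powr p \<partial>lborel) \<le> \<theta> \<Longrightarrow>
      (\<integral>z\<in>K. f z \<partial>lborel) \<le> e * r powr (real DIM('a) - real DIM('a) / p)"
    using set_integral_le_if_powr_set_integral_le[OF f p \<Lambda> e] by blast
  obtain \<delta>1 where "\<delta>1 > 0"
    and small: "\<And>x r. 0 < r \<Longrightarrow> r < \<delta>1 \<Longrightarrow> (\<integral>z\<in>cball x (\<Lambda> * r). f z powr p \<partial>lborel) \<le> \<theta>"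
    using set_integral_small_cballs_le[OF h \<Lambda> \<open>\<theta> > 0\<close>] by blast
  obtain R where large: "\<And>x r. R < r \<Longrightarrow>
      (\<integral>z\<in>cball x (\<Lambda> * r). f z \<partial>lborel) \<le> e * r powr (real DIM('a) - real DIM('a) / p)"
    using set_integral_large_cballs_le[OF f p \<Lambda> e] by blast
  define \<delta> where "\<delta> = min \<delta>1 (1 / max R 1)"
  have "\<delta> > 0" "\<delta> \<le> \<delta>1" "\<delta> \<le> 1 / max R 1"
    unfolding \<delta>_def using \<open>\<delta>1 > 0\<close> by auto
  then have "\<delta> * max R 1 \<le> 1"
    by (simp add: le_divide_eq)
  then have "max R 1 \<le> 1 / \<delta>"
    using \<open>\<delta> > 0\<close> by (simp add: le_divide_eq mult.commute)
  obtain M where far: "\<And>x \<rho>. \<rho> \<le> \<Lambda> / \<delta> \<Longrightarrow> M < norm x \<Longrightarrow> (\<integral>z\<in>cball x \<rho>. f z powr p \<partial>lborel) \<le> \<theta>"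
    using set_integral_far_cballs_le[OF h \<open>\<theta> > 0\<close>] by blast
  have "(\<integral>z\<in>cball x (\<Lambda> * r). f z \<partial>lborel) \<le> e * r powr (real DIM('a) - real DIM('a) / p)"
    if r: "0 < r" and regime: "r < \<delta> \<or> 1/\<delta> < r \<or> M < norm x" for x r
  proof -
    consider "r < \<delta>" | "1/\<delta> < r" | "r \<le> 1/\<delta>" "M < norm x" using regime by linarith
    then show ?thesis
    proof cases
      case 1
      then show ?thesis using small r \<open>\<delta> \<le> \<delta>1\<close> by (intro mass) auto
    next
      case 2
      then show ?thesis using \<open>max R 1 \<le> 1 / \<delta>\<close> by (intro large) simp
    next
      case 3
      then have "\<Lambda> * r \<le> \<Lambda> / \<delta>" using \<Lambda> by (simp add: divide_inverse)
      then show ?thesis using far 3 r by (intro mass) auto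
    qed
  qed
  then show ?thesis using \<open>\<delta> > 0\<close> by blast
qed

section \<open>Attainment of the Hoelder seminorm\<close>

lemma holder_quot_nonneg: "holder_quot \<alpha> \<phi> x y \<ge> 0"
  by (simp add: holder_quot_def)

lemma holder_quot_le_seminorm:
  assumes "holder_finite \<alpha> \<phi>" and "x \<noteq> y"
  shows "holder_quot \<alpha> \<phi> x y \<le> holder_seminorm \<alpha> \<phi>"
proof -
  have "holder_quot \<alpha> \<phi> (fst (x, y)) (snd (x, y)) \<le> holder_seminorm \<alpha> \<phi>"
    unfolding holder_seminorm_def
    by (rule cSUP_upper) (use assms in \<open>auto simp: holder_finite_def\<close>)
  then show ?thesis by simp
qed

lemma exists_neq: "\<exists>x y :: 'a::euclidean_space. x \<noteq> y"
proof -
  obtain b :: 'a where "b \<in> Basis" using nonempty_Basis by blast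
  then have "b \<noteq> 0" by auto
  then show ?thesis by blast
qed

lemma holder_seminorm_nonneg:
  fixes \<phi> :: "'a::euclidean_space \<Rightarrow> real"
  assumes "holder_finite \<alpha> \<phi>"
  shows "holder_seminorm \<alpha> \<phi> \<ge> 0"
  using exists_neq[where 'a='a] holder_quot_le_seminorm[OF assms] holder_quot_nonneg order_trans by metis

lemma abs_diff_le_holder_seminorm:
  assumes "holder_finite \<alpha> \<phi>" and "\<alpha> > 0"
  shows "\<bar>\<phi> x - \<phi> y\<bar> \<le> holder_seminorm \<alpha> \<phi> * norm (x - y) powr \<alpha>"
proof (cases "x = y")
  case False
  then have "norm (x - y) powr \<alpha> > 0" by simp
  with holder_quot_le_seminorm[OF assms(1) False] show ?thesis
    by (simp add: holder_quot_def divide_simps)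
qed simp

lemma holder_quot_le_iff:
  assumes "x \<noteq> y"
  shows "holder_quot \<alpha> \<phi> x y \<le> c \<longleftrightarrow> \<bar>\<phi> x - \<phi> y\<bar> \<le> c * dist x y powr \<alpha>"
  using assms by (simp add: holder_quot_def dist_norm divide_le_eq)

text \<open>The pairs with \<open>\<delta> \<le> dist x y \<le> 1/\<delta>\<close> and \<open>norm x \<le> M\<close> exhaust the compact subsets of
  \<open>{(x, y). x \<noteq> y}\<close>, so this says that the Hoelder quotient is eventually at most \<open>c + e\<close>
  as \<open>(x, y)\<close> leaves every compact set of pairs of distinct points.\<close>
definition holder_quot_eventually_le :: "real \<Rightarrow> ('a::euclidean_space \<Rightarrow> real) \<Rightarrow> real \<Rightarrow> bool" where
  "holder_quot_eventually_le \<alpha> \<phi> c \<longleftrightarrow>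
     (\<forall>e>0. \<exists>\<delta>>0. \<exists>M. \<forall>x y. x \<noteq> y \<longrightarrow> (dist x y < \<delta> \<or> 1/\<delta> < dist x y \<or> M < norm x) \<longrightarrow>
        holder_quot \<alpha> \<phi> x y \<le> c + e)"

lemma compact_pairs_dist_bounded:
  "compact {(x::'a::euclidean_space, y). \<delta> \<le> dist x y \<and> dist x y \<le> R \<and> norm x \<le> M}"
proof (rule compact_eq_bounded_closed[THEN iffD2, OF conjI])
  let ?K = "{(x::'a, y). \<delta> \<le> dist x y \<and> dist x y \<le> R \<and> norm x \<le> M}"
  have "?K \<subseteq> cball 0 M \<times> cball 0 (M + R)"
  proof (clarsimp)
    fix x y :: 'a assume "dist x y \<le> R" "norm x \<le> M"
    moreover have "norm y \<le> norm x + dist x y"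
      by (metis dist_commute dist_norm norm_triangle_sub)
    ultimately show "norm y \<le> M + R" by simp
  qed
  then show "bounded ?K"
    using bounded_Times[OF bounded_cball bounded_cball] bounded_subset by blast
  have "closed ({xy. \<delta> \<le> dist (fst xy) (snd xy)} \<inter> {xy. dist (fst xy) (snd xy) \<le> R} \<inter> {xy::'a \<times> 'a. norm (fst xy) \<le> M})"
    by (intro closed_Int closed_Collect_le continuous_intros)
  moreover have "?K = {xy. \<delta> \<le> dist (fst xy) (snd xy)} \<inter> {xy. dist (fst xy) (snd xy) \<le> R} \<inter> {xy. norm (fst xy) \<le> M}"
    by auto
  ultimately show "closed ?K" by simp
qed

lemma cSUP_attained_if_le_off_compact:
  fixes Q :: "'b::topological_space \<Rightarrow> real"
  assumes nonempty: "S \<noteq> {}" and bdd: "bdd_above (Q ` S)" and K: "compact K" "K \<subseteq> S" "continuous_on K Q"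
    and outside: "\<And>x. x \<in> S - K \<Longrightarrow> Q x \<le> c" and less: "c < (SUP x\<in>S. Q x)"
  shows "\<exists>x\<in>K. Q x = (SUP x\<in>S. Q x)"
proof -
  obtain x1 where "x1 \<in> S" "c < Q x1"
    using less_cSUP_iff[OF nonempty bdd] less by blast
  then have "K \<noteq> {}" using outside[of x1] by fastforce
  then obtain x0 where "x0 \<in> K" and max: "\<And>x. x \<in> K \<Longrightarrow> Q x \<le> Q x0"
    using continuous_attains_sup[OF K(1) _ K(3)] by blast
  have "Q x \<le> max (Q x0) c" if "x \<in> S" for x
    using max[of x] outside[of x] that by (cases "x \<in> K") auto
  then have "(SUP x\<in>S. Q x) \<le> max (Q x0) c"
    using nonempty by (intro cSUP_least)
  moreover have "Q x0 \<le> (SUP x\<in>S. Q x)"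
    using \<open>x0 \<in> K\<close> K(2) bdd by (intro cSUP_upper) auto
  ultimately show ?thesis
    using \<open>x0 \<in> K\<close> less by (metis max_def order_antisym not_le)
qed

lemma holder_seminorm_attained:
  fixes \<phi> :: "'a::euclidean_space \<Rightarrow> real"
  assumes cont: "continuous_on UNIV \<phi>" and fin: "holder_finite \<alpha> \<phi>"
    and eventually: "holder_quot_eventually_le \<alpha> \<phi> c" and less: "c < holder_seminorm \<alpha> \<phi>"
  shows "\<exists>x0 y0. x0 \<noteq> y0 \<and> holder_seminorm \<alpha> \<phi> = holder_quot \<alpha> \<phi> x0 y0"
proof -
  define Q where "Q = (\<lambda>xy. holder_quot \<alpha> \<phi> (fst xy) (snd xy))"
  define S where "S = {(x::'a, y). x \<noteq> y}"
  have L_SUP: "holder_seminorm \<alpha> \<phi> = (SUP xy\<in>S. Q xy)" and bdd: "bdd_above (Q ` S)"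
    using fin unfolding holder_seminorm_def holder_finite_def Q_def S_def by simp_all
  define c' where "c' = (c + holder_seminorm \<alpha> \<phi>) / 2"
  have "c' < holder_seminorm \<alpha> \<phi>" "c < c'" using less by (simp_all add: c'_def field_simps)
  have ev: "\<forall>e>0. \<exists>\<delta>>0. \<exists>M. \<forall>x y. x \<noteq> y \<longrightarrow> (dist x y < \<delta> \<or> 1/\<delta> < dist x y \<or> M < norm x) \<longrightarrow>
      holder_quot \<alpha> \<phi> x y \<le> c + e"
    using eventually unfolding holder_quot_eventually_le_def .
  have "\<exists>\<delta>>0. \<exists>M. \<forall>x y. x \<noteq> y \<longrightarrow> (dist x y < \<delta> \<or> 1/\<delta> < dist x y \<or> M < norm x) \<longrightarrow>
      holder_quot \<alpha> \<phi> x y \<le> c + (c' - c)"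
    by (rule ev[rule_format]) (use \<open>c < c'\<close> in simp)
  then obtain \<delta> M where "\<delta> > 0" and outside: "\<forall>x y. x \<noteq> y \<longrightarrow> (dist x y < \<delta> \<or> 1/\<delta> < dist x y \<or> M < norm x) \<longrightarrow>
      Q (x, y) \<le> c'"
    unfolding Q_def by auto
  define K where "K = {(x::'a, y). \<delta> \<le> dist x y \<and> dist x y \<le> 1/\<delta> \<and> norm x \<le> M}"
  have "K \<subseteq> S" using \<open>\<delta> > 0\<close> by (auto simp: K_def S_def)
  have "Q xy \<le> c'" if xy_in: "xy \<in> S - K" for xy
  proof -
    obtain x y where xy: "xy = (x, y)" "x \<noteq> y"
      and "\<not> (\<delta> \<le> dist x y \<and> dist x y \<le> 1/\<delta> \<and> norm x \<le> M)"
      using xy_in by (auto simp: S_def K_def)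
    then have "dist x y < \<delta> \<or> 1/\<delta> < dist x y \<or> M < norm x" by linarith
    then show ?thesis using outside xy by blast
  qed
  moreover have "continuous_on K Q"
  proof -
    have "norm (fst xy - snd xy) \<noteq> 0" if "xy \<in> K" for xy
      using that \<open>\<delta> > 0\<close> by (auto simp: K_def dist_norm)
    then show ?thesis
      unfolding Q_def holder_quot_def
      by (intro continuous_intros continuous_on_compose2[OF cont, of _ fst]
          continuous_on_compose2[OF cont, of _ snd]) auto
  qed
  moreover have "S \<noteq> {}" using exists_neq[where 'a='a] by (auto simp: S_def)
  moreover have "compact K" unfolding K_def by (rule compact_pairs_dist_bounded)
  ultimately obtain xy0 where "xy0 \<in> K" "Q xy0 = holder_seminorm \<alpha> \<phi>"
    using cSUP_attained_if_le_off_compact[OF _ bdd _ \<open>K \<subseteq> S\<close>] \<open>c' < holder_seminorm \<alpha> \<phi>\<close>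
    unfolding L_SUP by blast
  then show ?thesis
    using \<open>K \<subseteq> S\<close> unfolding Q_def S_def by (metis (mono_tags, lifting) case_prodE mem_Collect_eq prod.sel subsetD)
qed

lemma holder_seminorm_attained_if_zero:
  fixes \<phi> :: "'a::euclidean_space \<Rightarrow> real"
  assumes "holder_finite \<alpha> \<phi>" and "holder_seminorm \<alpha> \<phi> = 0"
  shows "\<exists>x0 y0. x0 \<noteq> y0 \<and> holder_seminorm \<alpha> \<phi> = holder_quot \<alpha> \<phi> x0 y0"
proof -
  obtain x y :: 'a where "x \<noteq> y" using exists_neq by blast
  then show ?thesis
    using holder_quot_le_seminorm[OF assms(1)] holder_quot_nonneg assms(2) by (metis order_antisym)
qed

section \<open>Decay of the Hoelder quotient off compact sets of pairs\<close>

text \<open>Mollify at the scale \<open>\<eta> r\<close>, \<open>r = dist x y\<close>; the choice of \<open>\<eta>\<close> turns the Hoelder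
  error \<open>2 L (N \<eta> r)\<^sup>\<alpha>\<close> of the mollification into \<open>(L/2) r\<^sup>\<alpha>\<close>.\<close>
lemma abs_diff_le_sobolev_at_scale:
  fixes \<phi> :: "'a::euclidean_space \<Rightarrow> real"
  assumes cont: "continuous_on UNIV \<phi>" and fin: "holder_finite \<alpha> \<phi>" and "\<alpha> > 0"
    and wg: "weak_gradient \<phi> g" and "\<eta> > 0" and N\<eta>: "(real DIM('a) * \<eta>) powr \<alpha> = 1/4"
    and "x \<noteq> y"
  shows "\<bar>\<phi> x - \<phi> y\<bar> \<le> holder_seminorm \<alpha> \<phi> / 2 * dist x y powr \<alpha> +
    real DIM('a) * dist x y *
      (\<integral>z\<in>cball x ((real DIM('a) + 1 + real DIM('a) * \<eta>) * dist x y). norm (g z) \<partial>lborel) /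
      (exp (-4) ^ DIM('a) * (\<eta>/2) ^ DIM('a) * measure lborel (ball (0::'a) 1) * dist x y ^ DIM('a))"
proof -
  define L where "L = holder_seminorm \<alpha> \<phi>"
  define r where "r = dist x y"
  have "r > 0" using \<open>x \<noteq> y\<close> unfolding r_def by simp
  define \<epsilon> where "\<epsilon> = \<eta> * r"
  have "\<epsilon> > 0" unfolding \<epsilon>_def using \<open>\<eta> > 0\<close> \<open>r > 0\<close> by simp
  have estimate: "\<bar>\<phi> x - \<phi> y\<bar> \<le> 2 * L * (real DIM('a) * \<epsilon>) powr \<alpha> +
     real DIM('a) * norm (y - x) *
       (\<integral>z\<in>cball x ((real DIM('a) + 1) * norm (y - x) + real DIM('a) * \<epsilon>). norm (g z) \<partial>lborel) /
       (exp (-4) ^ DIM('a) * measure lborel (ball (0::'a) (\<epsilon>/2)))"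
    unfolding L_def
    by (rule abs_diff_le_weak_gradient_estimate[OF \<open>\<epsilon> > 0\<close> cont wg abs_diff_le_holder_seminorm[OF fin \<open>\<alpha> > 0\<close>]
          holder_seminorm_nonneg[OF fin] \<open>\<alpha> > 0\<close>])
  have norm_eq: "norm (y - x) = r" unfolding r_def by (simp add: dist_norm norm_minus_commute)
  have radius_eq: "(real DIM('a) + 1) * r + real DIM('a) * \<epsilon> = (real DIM('a) + 1 + real DIM('a) * \<eta>) * r"
    unfolding \<epsilon>_def by (simp add: algebra_simps)
  have measure_eq: "exp (-4) ^ DIM('a) * measure lborel (ball (0::'a) (\<epsilon>/2))
      = exp (-4) ^ DIM('a) * (\<eta>/2) ^ DIM('a) * measure lborel (ball (0::'a) 1) * r ^ DIM('a)"
    unfolding \<epsilon>_def using content_ball_conv_unit_ball[of "\<eta> * r / 2" "0::'a"] \<open>\<eta> > 0\<close> \<open>r > 0\<close>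
    by (simp add: power_mult_distrib field_simps)
  have holder_term_eq: "2 * L * (real DIM('a) * \<epsilon>) powr \<alpha> = L / 2 * r powr \<alpha>"
  proof -
    have "(real DIM('a) * \<epsilon>) powr \<alpha> = (real DIM('a) * \<eta>) powr \<alpha> * r powr \<alpha>"
      unfolding \<epsilon>_def using \<open>\<eta> > 0\<close> \<open>r > 0\<close> by (simp add: powr_mult[symmetric] mult.assoc)
    then show ?thesis using N\<eta> by simp
  qed
  from estimate show ?thesis
    unfolding norm_eq radius_eq measure_eq holder_term_eq unfolding L_def r_def .
qed

lemma holder_quot_eventually_le_sobolev:
  fixes \<phi> :: "'a::euclidean_space \<Rightarrow> real"
  assumes cont: "continuous_on UNIV \<phi>" and fin: "holder_finite \<alpha> \<phi>"
    and \<alpha>: "\<alpha> = 1 - real DIM('a) / p" "\<alpha> > 0" and p: "p > 1"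
    and wg: "weak_gradient \<phi> g" and g_Lp: "(\<integral>\<^sup>+x. ennreal (norm (g x) powr p) \<partial>lborel) < \<infinity>"
  shows "holder_quot_eventually_le \<alpha> \<phi> (holder_seminorm \<alpha> \<phi> / 2)"
  unfolding holder_quot_eventually_le_def
proof (intro allI impI)
  fix e :: real assume "e > 0"
  define N where "N = DIM('a)"
  have "N \<ge> 1" unfolding N_def by (simp add: DIM_positive Suc_leI)
  define \<eta> where "\<eta> = (1/4) powr (1/\<alpha>) / N"
  have "\<eta> > 0" unfolding \<eta>_def using \<open>N \<ge> 1\<close> by simp
  have N\<eta>: "(real DIM('a) * \<eta>) powr \<alpha> = 1/4"
    unfolding \<eta>_def N_def using \<alpha>(2) by (simp add: powr_powr)
  define \<Lambda> where "\<Lambda> = real N + 1 + N * \<eta>"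
  have "\<Lambda> > 0" unfolding \<Lambda>_def using \<open>\<eta> > 0\<close> by (simp add: add_pos_nonneg)
  define K0 where "K0 = exp (-4) ^ N * (\<eta>/2) ^ N * measure lborel (ball (0::'a) 1)"
  have "K0 > 0" unfolding K0_def using \<open>\<eta> > 0\<close> content_ball_pos[of 1 "0::'a"] by simp
  define e' where "e' = e * K0 / N"
  have "e' > 0" unfolding e'_def using \<open>e > 0\<close> \<open>K0 > 0\<close> \<open>N \<ge> 1\<close> by simp
  have [measurable]: "g \<in> borel_measurable lborel" using wg by (simp add: weak_gradient_def)
  have "integrable lborel (\<lambda>z. norm (g z) powr p)"
    using g_Lp by (intro integrableI_bounded) auto
  then obtain \<delta> M where "\<delta> > 0" and mass: "\<And>x r. 0 < r \<Longrightarrow> r < \<delta> \<or> 1/\<delta> < r \<or> M < norm x \<Longrightarrow>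
      (\<integral>z\<in>cball x (\<Lambda> * r). norm (g z) \<partial>lborel) \<le> e' * r powr (real N - real N / p)"
    using set_integral_cball_le_off_compact[of "\<lambda>z. norm (g z)" p \<Lambda> e'] p \<open>\<Lambda> > 0\<close> \<open>e' > 0\<close>
    unfolding N_def by auto
  have "holder_quot \<alpha> \<phi> x y \<le> holder_seminorm \<alpha> \<phi> / 2 + e"
    if "x \<noteq> y" and regime: "dist x y < \<delta> \<or> 1/\<delta> < dist x y \<or> M < norm x" for x y
  proof -
    define r where "r = dist x y"
    have "r > 0" using \<open>x \<noteq> y\<close> unfolding r_def by simp
    have "\<bar>\<phi> x - \<phi> y\<bar> \<le> holder_seminorm \<alpha> \<phi> / 2 * r powr \<alpha> +
        real N * r * (\<integral>z\<in>cball x (\<Lambda> * r). norm (g z) \<partial>lborel) / (K0 * r ^ N)"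
      using abs_diff_le_sobolev_at_scale[OF cont fin \<alpha>(2) wg \<open>\<eta> > 0\<close> N\<eta> \<open>x \<noteq> y\<close>]
      unfolding r_def \<Lambda>_def K0_def N_def by (simp add: mult.assoc)
    also have "real N * r * (\<integral>z\<in>cball x (\<Lambda> * r). norm (g z) \<partial>lborel) / (K0 * r ^ N) \<le>
        real N * r * (e' * r powr (real N - real N / p)) / (K0 * r ^ N)"
      using mass[OF \<open>r > 0\<close>] regime \<open>r > 0\<close> \<open>K0 > 0\<close>
      by (intro divide_right_mono mult_left_mono) (auto simp: r_def)
    also have "\<dots> = e * (r * r powr (real N - real N / p) / r ^ N)"
      unfolding e'_def using \<open>K0 > 0\<close> \<open>N \<ge> 1\<close> \<open>r > 0\<close> by (simp add: field_simps)
    also have "r * r powr (real N - real N / p) / r ^ N = r powr \<alpha>"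
    proof -
      have "r * r powr (real N - real N / p) = r powr (1 + (real N - real N / p))"
        using \<open>r > 0\<close> by (simp add: powr_add)
      also have "1 + (real N - real N / p) = \<alpha> + real N"
        using \<alpha>(1) unfolding N_def by simp
      also have "r powr (\<alpha> + real N) = r powr \<alpha> * r ^ N"
        using \<open>r > 0\<close> by (simp add: powr_add powr_realpow)
      finally show ?thesis using \<open>r > 0\<close> by simp
    qed
    finally have "\<bar>\<phi> x - \<phi> y\<bar> \<le> (holder_seminorm \<alpha> \<phi> / 2 + e) * r powr \<alpha>"
      by (simp add: distrib_right)
    then show ?thesis
      using \<open>x \<noteq> y\<close> by (simp add: holder_quot_le_iff r_def)
  qed
  then show "\<exists>\<delta>>0. \<exists>M. \<forall>x y. x \<noteq> y \<longrightarrow> (dist x y < \<delta> \<or> 1/\<delta> < dist x y \<or> M < norm x) \<longrightarrow>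
      holder_quot \<alpha> \<phi> x y \<le> holder_seminorm \<alpha> \<phi> / 2 + e"
    using \<open>\<delta> > 0\<close> by blast
qed

lemma dist_pair_in_balls:
  assumes "z \<in> ball x \<rho>" "w \<in> ball y \<rho>"
  shows "dist x y - 2 * \<rho> \<le> dist z w" "dist z w \<le> dist x y + 2 * \<rho>"
  using assms dist_triangle[of z w x] dist_triangle[of x w y] dist_triangle[of x y z] dist_triangle[of z y w]
  by (auto simp: dist_commute)

lemma powr_scaling_identity:
  fixes e r \<eta> V \<alpha> p q :: real and N :: nat
  assumes "r > 0" "\<eta> > 0" "q = \<alpha> * p + 2 * real N" "e > 0"
  shows "(e * r powr \<alpha>) powr p / ((1 + 2 * \<eta>) * r) powr q * ((\<eta> * r) ^ N * V)\<^sup>2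
       = e powr p / (1 + 2 * \<eta>) powr q * (\<eta> ^ N * V)\<^sup>2"
proof -
  have "(e * r powr \<alpha>) powr p = e powr p * r powr (\<alpha> * p)"
    using assms by (simp add: powr_mult powr_powr)
  moreover have "((1 + 2 * \<eta>) * r) powr q = (1 + 2 * \<eta>) powr q * r powr q"
    using assms by (simp add: powr_mult)
  moreover have "r powr q = r powr (\<alpha> * p) * (r ^ N * r ^ N)"
  proof -
    have "r powr q = r powr (\<alpha> * p) * r powr (real N) * r powr (real N)"
      unfolding assms(3) by (simp add: powr_add[symmetric] algebra_simps)
    then show ?thesis using assms(1) by (simp add: powr_realpow)
  qed
  moreover have "r powr (\<alpha> * p) > 0" "(1 + 2 * \<eta>) powr q > 0" "r ^ N > 0"
    using assms by auto
  ultimately show ?thesis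
    by (simp add: power2_eq_square power_mult_distrib field_simps)
qed

lemma emeasure_ball_eq_unit_ball:
  "r \<ge> 0 \<Longrightarrow> emeasure lborel (ball (x::'a::euclidean_space) r) = ennreal (r ^ DIM('a) * measure lborel (ball (0::'a) 1))"
  using emeasure_eq_ennreal_measure[of lborel "ball x r"] emeasure_lborel_ball_finite[of x r]
    content_ball_conv_unit_ball[of r x] by simp

text \<open>On \<open>ball x (\<eta> r) \<times> ball y (\<eta> r)\<close>, \<open>r = dist x y\<close>, the difference \<open>|\<phi> z - \<phi> w|\<close> stays
  above \<open>e r\<^sup>\<alpha>\<close>; the exponent \<open>q = \<alpha> p + 2 N\<close> makes the resulting lower bound independent
  of \<open>r\<close>.\<close>
lemma gagliardo_energy_near_pair_ge:
  fixes \<phi> :: "'a::euclidean_space \<Rightarrow> real"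
  assumes holder: "\<And>a b. \<bar>\<phi> a - \<phi> b\<bar> \<le> L * norm (a - b) powr \<alpha>" and "L \<ge> 0" "\<alpha> > 0"
    and "p > 0" and q: "q = \<alpha> * p + 2 * real DIM('a)"
    and \<eta>: "0 < \<eta>" "\<eta> \<le> 1/4" and "x \<noteq> y" and "e > 0"
    and big: "(2 * L * \<eta> powr \<alpha> + e) * dist x y powr \<alpha> \<le> \<bar>\<phi> x - \<phi> y\<bar>"
  shows "ennreal (e powr p / (1 + 2 * \<eta>) powr q * (\<eta> ^ DIM('a) * measure lborel (ball (0::'a) 1))\<^sup>2)
    \<le> (\<integral>\<^sup>+zw. ennreal (\<bar>\<phi> (fst zw) - \<phi> (snd zw)\<bar> powr p / norm (fst zw - snd zw) powr q) *
          indicator (ball x (\<eta> * dist x y) \<times> ball y (\<eta> * dist x y)) zw \<partial>(lborel \<Otimes>\<^sub>M lborel))"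
proof -
  define r where "r = dist x y"
  define \<rho> where "\<rho> = \<eta> * r"
  define V where "V = measure lborel (ball (0::'a) 1)"
  have "r > 0" using \<open>x \<noteq> y\<close> by (simp add: r_def)
  have "\<rho> > 0" "\<rho> \<le> r / 4" using \<open>r > 0\<close> \<eta> by (auto simp: \<rho>_def)
  have "q > 0" using q \<open>\<alpha> > 0\<close> \<open>p > 0\<close> by (simp add: add_pos_nonneg)
  define c where "c = (e * r powr \<alpha>) powr p / ((1 + 2 * \<eta>) * r) powr q"
  have "c \<ge> 0" unfolding c_def by simp
  have osc: "\<bar>\<phi> a - \<phi> b\<bar> \<le> L * \<eta> powr \<alpha> * r powr \<alpha>" if "dist a b < \<rho>" for a b
  proof -
    have "norm (a - b) powr \<alpha> \<le> \<rho> powr \<alpha>"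
      using that \<open>\<alpha> > 0\<close> by (intro powr_mono2) (auto simp: dist_norm)
    also have "\<rho> powr \<alpha> = \<eta> powr \<alpha> * r powr \<alpha>"
      unfolding \<rho>_def using \<eta> \<open>r > 0\<close> by (simp add: powr_mult)
    finally show ?thesis
      using holder[of a b] \<open>L \<ge> 0\<close> by (metis mult.assoc mult_left_mono order_trans)
  qed
  have pointwise: "ennreal c \<le> ennreal (\<bar>\<phi> z - \<phi> w\<bar> powr p / norm (z - w) powr q)"
    if "z \<in> ball x \<rho>" "w \<in> ball y \<rho>" for z w
  proof -
    have "e * r powr \<alpha> \<le> \<bar>\<phi> z - \<phi> w\<bar>"
      using osc[of x z] osc[of y w] that big unfolding r_def by (auto simp: algebra_simps)
    then have num: "(e * r powr \<alpha>) powr p \<le> \<bar>\<phi> z - \<phi> w\<bar> powr p"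
      using \<open>p > 0\<close> \<open>e > 0\<close> by (intro powr_mono2) auto
    have "r - 2 * \<rho> \<le> dist z w" "dist z w \<le> r + 2 * \<rho>"
      using dist_pair_in_balls[OF that] unfolding r_def by auto
    then have "dist z w \<le> (1 + 2 * \<eta>) * r" "0 < dist z w"
      using \<open>\<rho> \<le> r / 4\<close> \<open>r > 0\<close> unfolding \<rho>_def by (auto simp: algebra_simps)
    then have den: "norm (z - w) powr q \<le> ((1 + 2 * \<eta>) * r) powr q" "0 < norm (z - w)"
      using \<open>q > 0\<close> by (auto simp: dist_norm intro!: powr_mono2)
    show ?thesis
      unfolding c_def using num den \<open>e > 0\<close> \<open>r > 0\<close> by (intro ennreal_leI frac_le) auto
  qed
  have "ennreal (c * (\<rho> ^ DIM('a) * V)\<^sup>2) = ennreal c * (emeasure lborel (ball x \<rho>) * emeasure lborel (ball y \<rho>))"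
    using \<open>\<rho> > 0\<close> \<open>c \<ge> 0\<close>
    by (simp add: V_def emeasure_ball_eq_unit_ball power2_eq_square ennreal_mult)
  also have "\<dots> = (\<integral>\<^sup>+zw. ennreal c * indicator (ball x \<rho> \<times> ball y \<rho>) zw \<partial>(lborel \<Otimes>\<^sub>M lborel))"
    by (simp add: nn_integral_cmult_indicator lborel.emeasure_pair_measure_Times)
  also have "\<dots> \<le> (\<integral>\<^sup>+zw. ennreal (\<bar>\<phi> (fst zw) - \<phi> (snd zw)\<bar> powr p / norm (fst zw - snd zw) powr q) *
          indicator (ball x \<rho> \<times> ball y \<rho>) zw \<partial>(lborel \<Otimes>\<^sub>M lborel))"
    using pointwise by (intro nn_integral_mono) (auto simp: indicator_def)
  finally show ?thesis
    unfolding \<rho>_def r_def V_def c_def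
    using powr_scaling_identity[OF \<open>r > 0\<close> \<eta>(1) q \<open>e > 0\<close>, of "measure lborel (ball (0::'a) 1)"] by (simp add: r_def)
qed

definition far_pairs :: "real \<Rightarrow> ('a::real_normed_vector \<times> 'a) set" where
  "far_pairs t = {zw. dist (fst zw) (snd zw) * t \<le> 1 \<or> t \<le> dist (fst zw) (snd zw) \<or> t \<le> norm (fst zw)}"

lemma eventually_nn_integral_far_pairs_less:
  fixes G :: "'a::euclidean_space \<times> 'a \<Rightarrow> ennreal"
  assumes G: "G \<in> borel_measurable (lborel \<Otimes>\<^sub>M lborel)" "(\<integral>\<^sup>+zw. G zw \<partial>(lborel \<Otimes>\<^sub>M lborel)) < \<infinity>"
    and diagonal: "\<And>z. G (z, z) = 0" and "c > 0"
  shows "\<forall>\<^sub>F t in at_top. (\<integral>\<^sup>+zw. G zw * indicator (far_pairs t) zw \<partial>(lborel \<Otimes>\<^sub>M lborel)) < c"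
proof (rule eventually_nn_integral_indicator_less[OF G])
  show "far_pairs t \<in> sets (lborel \<Otimes>\<^sub>M lborel)" for t
    unfolding lborel_prod sets_lborel far_pairs_def Collect_disj_eq
    by (intro borel_closed closed_Un closed_Collect_le continuous_intros)
  show "far_pairs t \<subseteq> far_pairs s" if "s \<le> t" for s t
    using that order_trans[OF mult_left_mono[OF that zero_le_dist]] by (auto simp: far_pairs_def)
  show "G zw = 0 \<or> (\<exists>t. zw \<notin> far_pairs t)" for zw
  proof (cases "fst zw = snd zw")
    case False
    define d where "d = dist (fst zw) (snd zw)"
    have "d > 0" using False by (simp add: d_def)
    define t where "t = 2 / d + d + norm (fst zw) + 1"
    have "d * t = 2 + d * (d + norm (fst zw) + 1)"
      using \<open>d > 0\<close> by (simp add: t_def field_simps)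
    moreover have "d * (d + norm (fst zw) + 1) \<ge> 0"
      using \<open>d > 0\<close> by simp
    moreover have "2 / d > 0" using \<open>d > 0\<close> by simp
    ultimately have "\<not> d * t \<le> 1" "d < t" "norm (fst zw) < t"
      using \<open>d > 0\<close> norm_ge_zero[of "fst zw"] unfolding t_def by linarith+
    then have "zw \<notin> far_pairs t" by (auto simp: far_pairs_def d_def)
    then show ?thesis by blast
  qed (metis diagonal prod.collapse)
qed (use \<open>c > 0\<close> in simp)

lemma balls_around_pair_subset_far_pairs:
  fixes x y :: "'a::real_normed_vector"
  assumes "0 < \<eta>" "\<eta> \<le> 1/4" and "T \<ge> 1"
    and regime: "dist x y < 1 / (2 * T) \<or> 2 * T < dist x y \<or> 3 * T < norm x"
  shows "ball x (\<eta> * dist x y) \<times> ball y (\<eta> * dist x y) \<subseteq> far_pairs T"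
proof (rule subsetI, elim SigmaE)
  fix zw z w
  assume z: "z \<in> ball x (\<eta> * dist x y)" and w: "w \<in> ball y (\<eta> * dist x y)" and zw: "zw = (z, w)"
  define r where "r = dist x y"
  have "\<eta> * r \<le> r / 4" using mult_right_mono[OF assms(2), of r] by (simp add: r_def)
  then have lower: "r / 2 \<le> dist z w" and upper: "dist z w \<le> 3 / 2 * r"
    using dist_pair_in_balls[OF z w] unfolding r_def by linarith+
  have "norm x \<le> norm z + dist x z"
    by (metis dist_norm norm_triangle_sub)
  then have far: "norm x - r / 4 \<le> norm z"
    using z \<open>\<eta> * r \<le> r / 4\<close> by (simp add: r_def)
  consider "r < 1 / (2 * T)" | "2 * T < r" | "r \<le> 2 * T" "3 * T < norm x"
    using regime unfolding r_def by linarith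
  then have "(z, w) \<in> far_pairs T"
  proof cases
    case 1
    then have "r * T < 1 / 2" using \<open>T \<ge> 1\<close> by (simp add: field_simps)
    moreover have "dist z w * T \<le> 3 / 2 * r * T"
      using upper \<open>T \<ge> 1\<close> by (intro mult_right_mono) auto
    ultimately show ?thesis by (simp add: far_pairs_def)
  next
    case 2
    then show ?thesis using lower by (simp add: far_pairs_def)
  next
    case 3
    then show ?thesis using far \<open>T \<ge> 1\<close> by (simp add: far_pairs_def)
  qed
  then show "zw \<in> far_pairs T" using zw by simp
qed

lemma holder_quot_eventually_le_fractional:
  fixes \<phi> :: "'a::euclidean_space \<Rightarrow> real"
  assumes cont: "continuous_on UNIV \<phi>" and fin: "holder_finite \<alpha> \<phi>" and "\<alpha> > 0" and "p > 0"
    and q: "q = \<alpha> * p + 2 * real DIM('a)"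
    and energy: "(\<integral>\<^sup>+x. \<integral>\<^sup>+y. ennreal (\<bar>\<phi> x - \<phi> y\<bar> powr p / norm (x - y) powr q) \<partial>lborel \<partial>lborel) < \<infinity>"
  shows "holder_quot_eventually_le \<alpha> \<phi> (holder_seminorm \<alpha> \<phi> / 2)"
  unfolding holder_quot_eventually_le_def
proof (intro allI impI)
  fix e :: real assume "e > 0"
  define L where "L = holder_seminorm \<alpha> \<phi>"
  have "L \<ge> 0" unfolding L_def by (rule holder_seminorm_nonneg[OF fin])
  have holder: "\<bar>\<phi> a - \<phi> b\<bar> \<le> L * norm (a - b) powr \<alpha>" for a b
    unfolding L_def by (rule abs_diff_le_holder_seminorm[OF fin \<open>\<alpha> > 0\<close>])
  define \<eta> where "\<eta> = min (1/4) ((1/4) powr (1/\<alpha>))"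
  have \<eta>: "0 < \<eta>" "\<eta> \<le> 1/4" unfolding \<eta>_def by auto
  have "\<eta> powr \<alpha> \<le> ((1/4) powr (1/\<alpha>)) powr \<alpha>"
    using \<eta> \<open>\<alpha> > 0\<close> unfolding \<eta>_def by (intro powr_mono2) auto
  then have "\<eta> powr \<alpha> \<le> 1/4" using \<open>\<alpha> > 0\<close> by (simp add: powr_powr)
  define c where "c = e powr p / (1 + 2 * \<eta>) powr q * (\<eta> ^ DIM('a) * measure lborel (ball (0::'a) 1))\<^sup>2"
  have "c > 0" unfolding c_def using \<open>e > 0\<close> \<eta> content_ball_pos[of 1 "0::'a"] by simp
  define G where "G zw = ennreal (\<bar>\<phi> (fst zw) - \<phi> (snd zw)\<bar> powr p / norm (fst zw - snd zw) powr q)"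
    for zw :: "'a \<times> 'a"
  have "\<phi> \<in> borel_measurable lborel"
    using borel_measurable_continuous_onI[OF cont] by simp
  then have G_meas: "G \<in> borel_measurable (lborel \<Otimes>\<^sub>M lborel)"
    unfolding G_def by measurable
  moreover have "(\<integral>\<^sup>+zw. G zw \<partial>(lborel \<Otimes>\<^sub>M lborel)) < \<infinity>"
    using energy lborel.nn_integral_fst[OF G_meas] unfolding G_def[abs_def] by simp
  ultimately obtain T0 where
    "\<And>t. T0 \<le> t \<Longrightarrow> (\<integral>\<^sup>+zw. G zw * indicator (far_pairs t) zw \<partial>(lborel \<Otimes>\<^sub>M lborel)) < ennreal c"
    using eventually_nn_integral_far_pairs_less[of G c] \<open>c > 0\<close>
    by (auto simp: G_def eventually_at_top_linorder)
  then have T: "(\<integral>\<^sup>+zw. G zw * indicator (far_pairs (max T0 1)) zw \<partial>(lborel \<Otimes>\<^sub>M lborel)) < ennreal c"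
    by simp
  define \<delta> where "\<delta> = 1 / (2 * max T0 1)"
  have "holder_quot \<alpha> \<phi> x y \<le> L / 2 + e"
    if "x \<noteq> y" and regime: "dist x y < \<delta> \<or> 1/\<delta> < dist x y \<or> 3 * max T0 1 < norm x" for x y
  proof (rule ccontr)
    define B where "B = ball x (\<eta> * dist x y) \<times> ball y (\<eta> * dist x y)"
    assume "\<not> holder_quot \<alpha> \<phi> x y \<le> L / 2 + e"
    then have "(L / 2 + e) * dist x y powr \<alpha> \<le> \<bar>\<phi> x - \<phi> y\<bar>"
      using \<open>x \<noteq> y\<close> holder_quot_le_iff[of x y \<alpha> \<phi> "L / 2 + e"] by simp
    moreover have "2 * L * \<eta> powr \<alpha> \<le> L / 2"
      using mult_left_mono[OF \<open>\<eta> powr \<alpha> \<le> 1/4\<close> \<open>L \<ge> 0\<close>] by simp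
    then have "(2 * L * \<eta> powr \<alpha> + e) * dist x y powr \<alpha> \<le> (L / 2 + e) * dist x y powr \<alpha>"
      by (intro mult_right_mono) auto
    ultimately have "(2 * L * \<eta> powr \<alpha> + e) * dist x y powr \<alpha> \<le> \<bar>\<phi> x - \<phi> y\<bar>"
      by linarith
    then have "ennreal c \<le> (\<integral>\<^sup>+zw. G zw * indicator B zw \<partial>(lborel \<Otimes>\<^sub>M lborel))"
      unfolding c_def G_def B_def
      by (rule gagliardo_energy_near_pair_ge[OF holder \<open>L \<ge> 0\<close> \<open>\<alpha> > 0\<close> \<open>p > 0\<close> q \<eta> \<open>x \<noteq> y\<close> \<open>e > 0\<close>])
    also have "\<dots> \<le> (\<integral>\<^sup>+zw. G zw * indicator (far_pairs (max T0 1)) zw \<partial>(lborel \<Otimes>\<^sub>M lborel))"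
      using balls_around_pair_subset_far_pairs[OF \<eta>, of "max T0 1" x y] regime
      unfolding B_def \<delta>_def by (intro nn_integral_mono) (auto simp: indicator_def)
    finally show False using T by simp
  qed
  then show "\<exists>\<delta>>0. \<exists>M. \<forall>x y. x \<noteq> y \<longrightarrow> (dist x y < \<delta> \<or> 1/\<delta> < dist x y \<or> M < norm x) \<longrightarrow>
      holder_quot \<alpha> \<phi> x y \<le> holder_seminorm \<alpha> \<phi> / 2 + e"
    unfolding L_def \<delta>_def by (intro exI[of _ "1 / (2 * max T0 1)"] exI[of _ "3 * max T0 1"]) auto
qed

theorem theorem5p4:
  fixes \<phi> :: "'a::euclidean_space \<Rightarrow> real" and s p :: real
  assumes "0 < s" "s \<le> 1" "1 < p" "s * p > real DIM('a)"
    and "\<phi> \<in> calW s p"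
  shows "\<exists>x0 y0. x0 \<noteq> y0 \<and>
           holder_seminorm (alpha_sp s p TYPE('a)) \<phi> = holder_quot (alpha_sp s p TYPE('a)) \<phi> x0 y0"
proof -
  define \<alpha> where "\<alpha> = alpha_sp s p TYPE('a)"
  have \<alpha>_eq: "\<alpha> = s - real DIM('a) / p" unfolding \<alpha>_def alpha_sp_def ..
  have "\<alpha> > 0" using assms(3,4) by (simp add: \<alpha>_eq field_simps)
  have cont: "continuous_on UNIV \<phi>" and fin: "holder_finite \<alpha> \<phi>" and W: "Wsp_seminorm_finite s p \<phi>"
    using assms(5) unfolding calW_def \<alpha>_def by auto
  have "holder_quot_eventually_le \<alpha> \<phi> (holder_seminorm \<alpha> \<phi> / 2)"
  proof (cases "s < 1")
    case True
    have "real DIM('a) + s * p = \<alpha> * p + 2 * real DIM('a)"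
      using assms(3) by (simp add: \<alpha>_eq field_simps)
    with True W show ?thesis
      unfolding Wsp_seminorm_finite_def
      by (intro holder_quot_eventually_le_fractional[OF cont fin \<open>\<alpha> > 0\<close>]) (use assms(3) in auto)
  next
    case False
    with W obtain g where "weak_gradient \<phi> g" "(\<integral>\<^sup>+x. ennreal (norm (g x) powr p) \<partial>lborel) < \<infinity>"
      unfolding Wsp_seminorm_finite_def by auto
    moreover have "\<alpha> = 1 - real DIM('a) / p" using False assms(2) \<alpha>_eq by simp
    ultimately show ?thesis
      using holder_quot_eventually_le_sobolev[OF cont fin _ \<open>\<alpha> > 0\<close> assms(3)] by blast
  qed
  moreover have "holder_seminorm \<alpha> \<phi> / 2 < holder_seminorm \<alpha> \<phi>" if "holder_seminorm \<alpha> \<phi> \<noteq> 0"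
    using that holder_seminorm_nonneg[OF fin] by simp
  ultimately show ?thesis
    unfolding \<alpha>_def[symmetric]
    using holder_seminorm_attained[OF cont fin] holder_seminorm_attained_if_zero[OF fin] by blast
qed

end
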